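(* Let $A=(a_{ik})$ be a real symmetric $n\times n$ matrix whose induced signed graph $\Gamma=(T,\sigma)$, $T=(V,E)$, has no cycle. Let $\lambda$ be an eigenvalue of $A$ with multiplicity $r$ and let $f:V\to\mathbb R$ be an eigenfunction for $\lambda$. Let $\mathcal F=\{x\in V: f(x)=0\text{ and }f(y)=0\text{ for all }y\sim x\}$, and let $\tilde r$ be the multiplicity of $\lambda$ as an eigenvalue of the matrix $\widetilde A$ obtained from $A$ by deleting all rows and columns with indices in $\mathcal F$. Then $$r\ge\tilde r=e_0-2z+c+|\mathcal F|,$$ where $z=|\{x\in V: f(x)=0\}|$, $e_0=|\{\{x,y\}\in E: f(x)=0\text{ or }f(y)=0\}|$, and $c$ is the number of connected components of $T$.
   Context: The induced signed graph of a real symmetric $n\times n$ matrix $A$ has vertex set $V=\{x_1,\dots,x_n\}$ (identified with indices), edge $\{x_i,x_j\}$ iff $i\ne j$ and $a_{ij}\ne0$, and sign $-a_{ij}/|a_{ij}|$. Eigenfunctions are nonzero eigenvectors viewed as functions on $V$; $y\sim x$ means $\{x,y\}\in E$. *)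

theory Defs
  imports "Jordan_Normal_Form.Char_Poly" "Jordan_Normal_Form.DL_Submatrix"
begin

text \<open>Underlying (unsigned) graph T = (V,E) of the induced signed graph of a square
matrix A: vertices are the indices 0..<n, and i,j (i different from j) are adjacent iff A(i,j) is nonzero.\<close>

definition mvert :: "real mat \<Rightarrow> nat set" where
  "mvert A = {0..<dim_row A}"

definition madj :: "real mat \<Rightarrow> nat \<Rightarrow> nat \<Rightarrow> bool" where
  "madj A i j \<longleftrightarrow> i < dim_row A \<and> j < dim_row A \<and> i \<noteq> j \<and> A $$ (i, j) \<noteq> 0"

definition medges :: "real mat \<Rightarrow> nat set set" where
  "medges A = {{i, j} | i j. madj A i j}"

definition has_cycle :: "real mat \<Rightarrow> bool" where
  "has_cycle A \<longleftrightarrow> (\<exists>vs. length vs \<ge> 3 \<and> distinct vs \<and>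
      (\<forall>i < length vs. madj A (vs ! i) (vs ! ((i + 1) mod length vs))))"

definition num_components :: "real mat \<Rightarrow> nat" where
  "num_components A = card (mvert A // {(i, j). i \<in> mvert A \<and> j \<in> mvert A \<and> (madj A)\<^sup>*\<^sup>* i j})"

text \<open>Multiplicity of an eigenvalue (as a root of the characteristic polynomial;
for symmetric matrices this equals the dimension of the eigenspace).
Non-eigenvalues have multiplicity 0.\<close>
definition eig_mult :: "real mat \<Rightarrow> real \<Rightarrow> nat" where
  "eig_mult A lam = order lam (char_poly A)"

end

(* Write M = A - lam I. For a symmetric matrix the multiplicity of lam in a principal
   submatrix is the nullity of M on the corresponding vertex set, because ker (C * C) = ker C
   for symmetric C, so all Jordan blocks for lam have size one.

   On a forest, remove a vertex v with at most one neighbour u and compare the nullity of M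
   on V - F before and after:
   - if f v = 0 then f u = 0 by the eigen-equation at v, so v lies in F and V - F is unchanged;
   - if v is isolated and f v <> 0 then M v v = 0 and the nullity drops by one;
   - if f v <> 0 = f u then M v v = 0, and deleting the pendant edge u v keeps the nullity;
   - if f v <> 0 and f u <> 0 then M v v <> 0, and eliminating v against the pivot M v v
     (a Schur complement) changes only the entry M u u and keeps f an eigenfunction.
   In every case |V| - 2 z + |F| minus the number of edges with both ends outside the zeros
   of f changes exactly as the nullity does; the count |E| + c = |V| for forests turns this
   into the stated formula. The same induction shows that kernel vectors on V - F vanish
   wherever f does, so they extend by zero to V, which gives r >= r~. *)

theory Submission
  imports Defs "HOL-Library.Function_Algebras"
    "Jordan_Normal_Form.Jordan_Normal_Form_Existence" "Jordan_Normal_Form.Jordan_Normal_Form_Uniqueness"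
begin

section \<open>Finitely supported functions on the natural numbers\<close>

text \<open>Kernels of principal submatrices are compared as subspaces of the real vector space
  \<open>nat \<Rightarrow> real\<close>, with vertex sets as supports.\<close>

abbreviation (input) scale_fun :: "real \<Rightarrow> (nat \<Rightarrow> real) \<Rightarrow> nat \<Rightarrow> real" where
  "scale_fun c g \<equiv> (\<lambda>x. c * g x)"

interpretation fspace: vector_space scale_fun
  by unfold_locales (auto simp: fun_eq_iff algebra_simps)

interpretation fspace_pair: vector_space_pair scale_fun scale_fun
  by unfold_locales

lemma sum_fun_apply: "(\<Sum>a\<in>A. F a) x = (\<Sum>a\<in>A. F a x)"
  by (induct A rule: infinite_finite_induct) auto

definition delta :: "nat \<Rightarrow> nat \<Rightarrow> real" where
  "delta v = (\<lambda>x. if x = v then 1 else 0)"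

definition supported_on :: "nat set \<Rightarrow> (nat \<Rightarrow> real) set" where
  "supported_on T = {g. \<forall>x. x \<notin> T \<longrightarrow> g x = 0}"

lemma supported_on_span_delta:
  assumes "finite T" "g \<in> supported_on T"
  shows "g \<in> fspace.span (delta ` T)"
proof -
  have "g = (\<Sum>x\<in>T. scale_fun (g x) (delta x))"
    using assms by (auto simp: fun_eq_iff sum_fun_apply delta_def supported_on_def if_distrib cong: if_cong)
  also have "\<dots> \<in> fspace.span (delta ` T)"
    by (intro fspace.span_sum fspace.span_scale fspace.span_base) auto
  finally show ?thesis .
qed

lemma independent_supported_on_finite:
  assumes "finite T" "B \<subseteq> supported_on T" "fspace.independent B"
  shows "finite B"
  using fspace.independent_span_bound[of "delta ` T" B] supported_on_span_delta assms by blast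

lemma dim_mono_supported_on:
  assumes "finite T" "W \<subseteq> supported_on T" "V \<subseteq> W"
  shows "fspace.dim V \<le> fspace.dim W"
proof -
  obtain C where C: "C \<subseteq> W" "fspace.independent C" "W \<subseteq> fspace.span C" "card C = fspace.dim W"
    using fspace.basis_exists by blast
  have "finite C" using independent_supported_on_finite[OF assms(1) _ C(2)] C(1) assms(2) by blast
  then show ?thesis using fspace.dim_le_card[of V C] C assms(3) by auto
qed

lemma dim_linear_inj_image:
  assumes lin: "Vector_Spaces.linear scale_fun scale_fun L"
    and V: "fspace.subspace V" and inj: "inj_on L V"
  shows "fspace.dim (L ` V) = fspace.dim V"
proof -
  obtain B where B: "B \<subseteq> V" "fspace.independent B" "V \<subseteq> fspace.span B" "card B = fspace.dim V"
    using fspace.basis_exists by blast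
  have span_B: "fspace.span B = V"
    using B fspace.span_minimal[OF B(1) V] by blast
  have "fspace.independent (L ` B)"
    using fspace_pair.linear_independent_injective_image[OF lin B(2)] inj span_B by simp
  moreover have "L ` V \<subseteq> fspace.span (L ` B)"
    using fspace_pair.linear_span_image[OF lin, of B] span_B by simp
  ultimately have "card (L ` B) = fspace.dim (L ` V)"
    using fspace.basis_card_eq_dim[of "L ` B" "L ` V"] B(1) by blast
  moreover have "card (L ` B) = card B"
    using card_image inj_on_subset[OF inj B(1)] by blast
  ultimately show ?thesis using B(4) by simp
qed

lemma linear_fun_upd_zero: "Vector_Spaces.linear scale_fun scale_fun (\<lambda>g. g(v := 0))"
  unfolding Vector_Spaces.linear_iff using fspace.vector_space_axioms by auto

section \<open>Kernels on vertex sets and leaf reductions\<close>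

definition annihilates_on :: "(nat \<Rightarrow> nat \<Rightarrow> real) \<Rightarrow> nat set \<Rightarrow> (nat \<Rightarrow> real) \<Rightarrow> bool" where
  "annihilates_on M T g \<longleftrightarrow> (\<forall>x\<in>T. (\<Sum>y\<in>T. M x y * g y) = 0)"

definition kernel_on :: "(nat \<Rightarrow> nat \<Rightarrow> real) \<Rightarrow> nat set \<Rightarrow> (nat \<Rightarrow> real) set" where
  "kernel_on M T = {g \<in> supported_on T. annihilates_on M T g}"

definition nullity_on :: "(nat \<Rightarrow> nat \<Rightarrow> real) \<Rightarrow> nat set \<Rightarrow> nat" where
  "nullity_on M T = fspace.dim (kernel_on M T)"

lemma kernel_on_supported_on: "kernel_on M T \<subseteq> supported_on T"
  unfolding kernel_on_def by blast

lemma kernel_on_subspace: "fspace.subspace (kernel_on M T)"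
  unfolding fspace.subspace_def kernel_on_def supported_on_def annihilates_on_def
  by (auto simp: distrib_left sum.distrib mult.left_commute simp flip: sum_distrib_left)

lemma kernel_on_empty: "kernel_on M {} = {0}"
  by (auto simp: kernel_on_def supported_on_def annihilates_on_def fun_eq_iff)

lemma nullity_on_empty: "nullity_on M {} = 0"
  unfolding nullity_on_def kernel_on_empty
  using fspace.basis_card_eq_dim[of "{}" "{0}"] fspace.span_empty fspace.independent_empty by auto

lemma sum_remove2:
  assumes "finite T" "u \<in> T" "v \<in> T" "u \<noteq> v"
  shows "sum F T = F u + F v + sum F (T - {u, v})"
proof -
  have "sum F T = F u + sum F (T - {u})" using assms by (intro sum.remove)
  also have "sum F (T - {u}) = F v + sum F (T - {u} - {v})"
    using assms by (intro sum.remove) auto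
  also have "T - {u} - {v} = T - {u, v}" by auto
  finally show ?thesis by (simp add: add.assoc)
qed

lemma annihilates_on_remove:
  assumes "finite T" "v \<in> T" "annihilates_on M T g" "\<forall>x\<in>T - {v}. M x v * g v = 0"
  shows "annihilates_on M (T - {v}) g"
  using assms sum.remove[OF assms(1,2)] unfolding annihilates_on_def by (metis DiffD1 add_0)

lemma annihilates_on_fun_upd:
  assumes "v \<notin> T"
  shows "annihilates_on M T (g(v := c)) \<longleftrightarrow> annihilates_on M T g"
proof -
  have "(\<Sum>y\<in>T. M x y * (g(v := c)) y) = (\<Sum>y\<in>T. M x y * g y)" for x
    using assms by (intro sum.cong) auto
  then show ?thesis unfolding annihilates_on_def by simp
qed

lemma annihilates_on_leaf_row:
  assumes "finite T" "u \<in> T" "v \<in> T" "u \<noteq> v" "\<forall>y\<in>T. y \<notin> {u, v} \<longrightarrow> M v y = 0"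
    and "annihilates_on M T g"
  shows "M v u * g u + M v v * g v = 0"
proof -
  have "(\<Sum>y\<in>T - {u, v}. M v y * g y) = 0" using assms(5) by (intro sum.neutral) auto
  then show ?thesis
    using assms sum_remove2[OF assms(1-4), of "\<lambda>y. M v y * g y"] unfolding annihilates_on_def by simp
qed

lemma kernel_on_remove:
  assumes "finite T" "v \<in> T" "g \<in> kernel_on M T" "\<forall>x\<in>T - {v}. M x v * g v = 0"
  shows "g(v := 0) \<in> kernel_on M (T - {v})"
  using assms annihilates_on_remove[OF assms(1,2)] annihilates_on_fun_upd[of v "T - {v}"]
  unfolding kernel_on_def supported_on_def by auto

lemma kernel_on_extend:
  assumes fin: "finite T" and sub: "T' \<subseteq> T" and g: "g \<in> kernel_on M T'"
    and rows: "\<forall>x\<in>T - T'. \<forall>y\<in>T'. M x y * g y = 0"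
  shows "g \<in> kernel_on M T"
proof -
  have "(\<Sum>y\<in>T. M x y * g y) = 0" if x: "x \<in> T" for x
  proof -
    have "(\<Sum>y\<in>T - T'. M x y * g y) = 0"
      using g by (intro sum.neutral) (auto simp: kernel_on_def supported_on_def)
    then have "(\<Sum>y\<in>T. M x y * g y) = (\<Sum>y\<in>T'. M x y * g y)"
      using sum.subset_diff[OF sub fin, of "\<lambda>y. M x y * g y"] by simp
    also have "\<dots> = 0"
    proof (cases "x \<in> T'")
      case True
      then show ?thesis using g by (simp add: kernel_on_def annihilates_on_def)
    next
      case False
      then show ?thesis using x rows by (intro sum.neutral) auto
    qed
    finally show ?thesis .
  qed
  then show ?thesis using g sub unfolding kernel_on_def supported_on_def annihilates_on_def by auto
qed

lemma nullity_on_remove_isolated: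
  assumes fin: "finite T" and v: "v \<in> T" and Mvv: "M v v = 0"
    and iso: "\<forall>y\<in>T. y \<noteq> v \<longrightarrow> M v y = 0 \<and> M y v = 0"
  shows "nullity_on M T = nullity_on M (T - {v}) + 1"
proof -
  let ?K = "kernel_on M (T - {v})"
  obtain B where B: "B \<subseteq> ?K" "fspace.independent B" "?K \<subseteq> fspace.span B" "card B = fspace.dim ?K"
    using fspace.basis_exists by blast
  have "finite B"
    using independent_supported_on_finite[OF fin _ B(2)] B(1)
    by (auto simp: kernel_on_def supported_on_def)
  have span_B: "fspace.span B = ?K"
    using B fspace.span_minimal[OF B(1) kernel_on_subspace] by blast
  have delta_notin: "delta v \<notin> fspace.span B"
    unfolding span_B by (simp add: kernel_on_def supported_on_def delta_def)
  have "?K \<subseteq> kernel_on M T"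
    using kernel_on_extend[OF fin, of "T - {v}"] iso by auto
  moreover have "delta v \<in> kernel_on M T"
    using fin v Mvv iso
    by (auto simp: kernel_on_def supported_on_def annihilates_on_def delta_def if_distrib
        sum.delta' cong: if_cong)
  moreover have "kernel_on M T \<subseteq> fspace.span (insert (delta v) B)"
  proof
    fix g assume g: "g \<in> kernel_on M T"
    have "g(v := 0) \<in> fspace.span B"
      using kernel_on_remove[OF fin v g] iso span_B by auto
    then have "g(v := 0) \<in> fspace.span (insert (delta v) B)"
      using fspace.span_mono[of B "insert (delta v) B"] by auto
    moreover have "scale_fun (g v) (delta v) \<in> fspace.span (insert (delta v) B)"
      by (intro fspace.span_scale fspace.span_base) simp
    ultimately have "g(v := 0) + scale_fun (g v) (delta v) \<in> fspace.span (insert (delta v) B)"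
      by (rule fspace.span_add)
    moreover have "g(v := 0) + scale_fun (g v) (delta v) = g"
      by (auto simp: fun_eq_iff delta_def)
    ultimately show "g \<in> fspace.span (insert (delta v) B)" by simp
  qed
  ultimately have "card (insert (delta v) B) = nullity_on M T"
    unfolding nullity_on_def using B(1) fspace.independent_insertI[OF delta_notin B(2)]
    by (intro fspace.basis_card_eq_dim) auto
  moreover have "delta v \<notin> B" using delta_notin fspace.span_base by blast
  ultimately show ?thesis
    unfolding nullity_on_def using B(4) \<open>finite B\<close> by simp
qed

lemma kernel_on_remove_pendant_edge:
  assumes fin: "finite T" and u: "u \<in> T" and v: "v \<in> T" and uv: "u \<noteq> v"
    and Mvv: "M v v = 0" and Mvu: "M v u \<noteq> 0"
    and leaf: "\<forall>y\<in>T. y \<notin> {u, v} \<longrightarrow> M v y = 0 \<and> M y v = 0"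
    and g: "g \<in> kernel_on M T"
  shows "g u = 0" "g(v := 0) \<in> kernel_on M (T - {u, v})"
proof -
  show gu: "g u = 0"
    using annihilates_on_leaf_row[OF fin u v uv, of M g] leaf g Mvv Mvu by (auto simp: kernel_on_def)
  then have "g \<in> kernel_on M (T - {u})"
    using kernel_on_remove[OF fin u g] by (simp add: fun_upd_idem)
  moreover have "\<forall>x\<in>T - {u} - {v}. M x v * g v = 0" using leaf by auto
  ultimately have "g(v := 0) \<in> kernel_on M (T - {u} - {v})"
    using fin v uv by (intro kernel_on_remove) auto
  moreover have "T - {u} - {v} = T - {u, v}" by auto
  ultimately show "g(v := 0) \<in> kernel_on M (T - {u, v})" by simp
qed

lemma kernel_on_pendant_edge_lift:
  assumes fin: "finite T" and u: "u \<in> T" and v: "v \<in> T" and uv: "u \<noteq> v"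
    and Mvv: "M v v = 0" and Muv: "M u v \<noteq> 0"
    and leaf: "\<forall>y\<in>T. y \<notin> {u, v} \<longrightarrow> M v y = 0 \<and> M y v = 0"
    and h: "h \<in> kernel_on M (T - {u, v})"
  shows "h(v := - (\<Sum>y\<in>T - {u, v}. M u y * h y) / M u v) \<in> kernel_on M T"
proof -
  let ?Q = "T - {u, v}"
  define c where "c = - (\<Sum>y\<in>?Q. M u y * h y) / M u v"
  have hQ: "h u = 0" "h v = 0" "annihilates_on M ?Q h"
    using h by (auto simp: kernel_on_def supported_on_def)
  have row: "(\<Sum>y\<in>T. M x y * (h(v := c)) y) = M x v * c + (\<Sum>y\<in>?Q. M x y * h y)" for x
  proof -
    have "(\<Sum>y\<in>?Q. M x y * (h(v := c)) y) = (\<Sum>y\<in>?Q. M x y * h y)"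
      by (intro sum.cong) auto
    then show ?thesis using sum_remove2[OF fin u v uv, of "\<lambda>y. M x y * (h(v := c)) y"] hQ uv by simp
  qed
  have "(\<Sum>y\<in>T. M x y * (h(v := c)) y) = 0" if x: "x \<in> T" for x
  proof -
    consider "x = v" | "x = u" | "x \<in> ?Q" using x by blast
    then show ?thesis
    proof cases
      case 1
      have "(\<Sum>y\<in>?Q. M v y * h y) = 0" using leaf by (intro sum.neutral) auto
      then show ?thesis using 1 row Mvv by simp
    next
      case 2
      then show ?thesis using row Muv by (simp add: c_def)
    next
      case 3
      then show ?thesis using row leaf hQ(3) by (simp add: annihilates_on_def)
    qed
  qed
  moreover have "h(v := c) \<in> supported_on T"
    using h v by (auto simp: kernel_on_def supported_on_def)
  ultimately show ?thesis unfolding c_def[symmetric] kernel_on_def annihilates_on_def by simp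
qed

lemma nullity_on_eq_via_fun_upd_zero:
  assumes img: "(\<lambda>g. g(v := 0)) ` kernel_on M T = kernel_on M' T'"
    and determined: "\<And>g. g \<in> kernel_on M T \<Longrightarrow> (\<And>y. y \<noteq> v \<Longrightarrow> g y = 0) \<Longrightarrow> g v = 0"
  shows "nullity_on M T = nullity_on M' T'"
proof -
  have "inj_on (\<lambda>g. g(v := 0)) (kernel_on M T)"
    unfolding fspace_pair.linear_inj_on_iff_eq_0[OF linear_fun_upd_zero kernel_on_subspace]
  proof (intro ballI impI)
    fix g assume g: "g \<in> kernel_on M T" and g0: "g(v := 0) = 0"
    have off_v: "g y = 0" if "y \<noteq> v" for y
      using that fun_cong[OF g0, of y] by (simp add: zero_fun_def)
    then have "g v = 0" by (rule determined[OF g])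
    then show "g = 0" using off_v by (intro ext) (metis zero_fun_def)
  qed
  then show ?thesis
    unfolding nullity_on_def img[symmetric]
    by (rule dim_linear_inj_image[OF linear_fun_upd_zero kernel_on_subspace, symmetric])
qed

lemma nullity_on_remove_pendant_edge:
  assumes fin: "finite T" and u: "u \<in> T" and v: "v \<in> T" and uv: "u \<noteq> v"
    and Mvv: "M v v = 0" and Mvu: "M v u \<noteq> 0" and Muv: "M u v \<noteq> 0"
    and leaf: "\<forall>y\<in>T. y \<notin> {u, v} \<longrightarrow> M v y = 0 \<and> M y v = 0"
  shows "nullity_on M T = nullity_on M (T - {u, v})"
proof (rule nullity_on_eq_via_fun_upd_zero)
  show "(\<lambda>g. g(v := 0)) ` kernel_on M T = kernel_on M (T - {u, v})"
  proof
    show "(\<lambda>g. g(v := 0)) ` kernel_on M T \<subseteq> kernel_on M (T - {u, v})"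
      using kernel_on_remove_pendant_edge(2)[OF fin u v uv Mvv Mvu leaf] by blast
  next
    show "kernel_on M (T - {u, v}) \<subseteq> (\<lambda>g. g(v := 0)) ` kernel_on M T"
    proof
      fix h assume h: "h \<in> kernel_on M (T - {u, v})"
      then have "h = (h(v := - (\<Sum>y\<in>T - {u, v}. M u y * h y) / M u v))(v := 0)"
        by (auto simp: kernel_on_def supported_on_def fun_eq_iff)
      then show "h \<in> (\<lambda>g. g(v := 0)) ` kernel_on M T"
        using kernel_on_pendant_edge_lift[OF fin u v uv Mvv Muv leaf h] by blast
    qed
  qed
next
  fix g assume g: "g \<in> kernel_on M T" and off_v: "\<And>y. y \<noteq> v \<Longrightarrow> g y = 0"
  have "(\<Sum>y\<in>T - {v}. M u y * g y) = 0" using off_v by (intro sum.neutral) auto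
  then have "M u v * g v = (\<Sum>y\<in>T. M u y * g y)"
    using sum.remove[OF fin v, of "\<lambda>y. M u y * g y"] by simp
  also have "\<dots> = 0" using g u by (simp add: kernel_on_def annihilates_on_def)
  finally show "g v = 0" using Muv by simp
qed

text \<open>Eliminating the leaf \<open>v\<close> against the pivot \<open>M v v\<close> changes only the entry at \<open>(u, u)\<close>.\<close>

definition schur_at :: "(nat \<Rightarrow> nat \<Rightarrow> real) \<Rightarrow> nat \<Rightarrow> nat \<Rightarrow> nat \<Rightarrow> nat \<Rightarrow> real" where
  "schur_at M u v = (\<lambda>x y. if x = u \<and> y = u then M u u - M u v * M v u / M v v else M x y)"

lemma sum_schur_at:
  assumes "finite S" "u \<in> S"
  shows "(\<Sum>y\<in>S. schur_at M u v x y * g y)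
    = (\<Sum>y\<in>S. M x y * g y) - (if x = u then M u v * M v u / M v v * g u else 0)"
proof (cases "x = u")
  case True
  have "(\<Sum>y\<in>S. schur_at M u v x y * g y)
      = (\<Sum>y\<in>S. M x y * g y - (if y = u then M u v * M v u / M v v * g u else 0))"
    using True by (intro sum.cong) (auto simp: schur_at_def left_diff_distrib)
  also have "\<dots> = (\<Sum>y\<in>S. M x y * g y) - M u v * M v u / M v v * g u"
    using assms by (simp add: sum_subtractf)
  finally show ?thesis using True by simp
qed (simp add: schur_at_def)

lemma annihilates_on_schur_at:
  assumes fin: "finite T" and u: "u \<in> T" and v: "v \<in> T" and uv: "u \<noteq> v"
    and Mvv: "M v v \<noteq> 0" and leaf: "\<forall>y\<in>T. y \<notin> {u, v} \<longrightarrow> M v y = 0 \<and> M y v = 0"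
    and g: "annihilates_on M T g"
  shows "annihilates_on (schur_at M u v) (T - {v}) g"
  unfolding annihilates_on_def
proof
  fix x assume x: "x \<in> T - {v}"
  have "M v u * g u + M v v * g v = 0"
    using annihilates_on_leaf_row[OF fin u v uv, of M g] leaf g by simp
  then have gv: "g v = - M v u * g u / M v v"
    using Mvv by (simp add: field_simps)
  have row: "(\<Sum>y\<in>T - {v}. M x y * g y) = - M x v * g v"
    using sum.remove[OF fin v, of "\<lambda>y. M x y * g y"] g x by (simp add: annihilates_on_def)
  show "(\<Sum>y\<in>T - {v}. schur_at M u v x y * g y) = 0"
  proof (cases "x = u")
    case True
    have "M u v * M v u / M v v * g u = - M u v * g v"
      unfolding gv by simp
    then show ?thesis using sum_schur_at[of "T - {v}" u M v x g] fin u uv row True by simp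
  next
    case False
    then show ?thesis using sum_schur_at[of "T - {v}" u M v x g] fin u uv row leaf x by simp
  qed
qed

lemma kernel_on_schur_at:
  assumes "finite T" "u \<in> T" "v \<in> T" "u \<noteq> v"
    and "M v v \<noteq> 0" "\<forall>y\<in>T. y \<notin> {u, v} \<longrightarrow> M v y = 0 \<and> M y v = 0"
    and g: "g \<in> kernel_on M T"
  shows "g(v := 0) \<in> kernel_on (schur_at M u v) (T - {v})"
  using annihilates_on_schur_at[OF assms(1-6), of g] annihilates_on_fun_upd[of v "T - {v}"] g
  by (auto simp: kernel_on_def supported_on_def)

lemma kernel_on_schur_at_lift:
  assumes fin: "finite T" and u: "u \<in> T" and v: "v \<in> T" and uv: "u \<noteq> v"
    and Mvv: "M v v \<noteq> 0" and leaf: "\<forall>y\<in>T. y \<notin> {u, v} \<longrightarrow> M v y = 0 \<and> M y v = 0"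
    and h: "h \<in> kernel_on (schur_at M u v) (T - {v})"
  shows "h(v := - M v u * h u / M v v) \<in> kernel_on M T"
proof -
  define c where "c = - M v u * h u / M v v"
  have hv: "h v = 0" and h_row: "\<And>x. x \<in> T - {v} \<Longrightarrow> (\<Sum>y\<in>T - {v}. schur_at M u v x y * h y) = 0"
    using h by (auto simp: kernel_on_def supported_on_def annihilates_on_def)
  have rest: "(\<Sum>y\<in>T - {v}. M x y * (h(v := c)) y) = (\<Sum>y\<in>T - {v}. M x y * h y)" for x
    by (intro sum.cong) auto
  have row: "(\<Sum>y\<in>T. M x y * (h(v := c)) y) = M x v * c + (\<Sum>y\<in>T - {v}. M x y * h y)" for x
    using sum.remove[OF fin v, of "\<lambda>y. M x y * (h(v := c)) y"] rest[of x] by simp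
  have "(\<Sum>y\<in>T. M x y * (h(v := c)) y) = 0" if x: "x \<in> T" for x
  proof -
    consider "x = v" | "x = u" | "x \<in> T - {u, v}" using x by blast
    then show ?thesis
    proof cases
      case 1
      have "(\<Sum>y\<in>T - {u, v}. M v y * h y) = 0" using leaf by (intro sum.neutral) auto
      moreover have "T - {v} - {u} = T - {u, v}" by auto
      ultimately have "(\<Sum>y\<in>T - {v}. M v y * h y) = M v u * h u"
        using sum.remove[of "T - {v}" u "\<lambda>y. M v y * h y"] fin u uv by simp
      then show ?thesis using 1 row Mvv by (simp add: c_def)
    next
      case 2
      have "(\<Sum>y\<in>T - {v}. M u y * h y) = M u v * M v u / M v v * h u"
        using h_row[of u] sum_schur_at[of "T - {v}" u M v u h] fin u uv by simp
      moreover have "M u v * c + M u v * M v u / M v v * h u = 0"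
        using Mvv unfolding c_def by (simp add: field_simps)
      ultimately show ?thesis using 2 row by simp
    next
      case 3
      then have "(\<Sum>y\<in>T - {v}. M x y * h y) = 0"
        using h_row[of x] sum_schur_at[of "T - {v}" u M v x h] fin u uv by simp
      then show ?thesis using 3 row leaf by simp
    qed
  qed
  moreover have "h(v := c) \<in> supported_on T"
    using h v by (auto simp: kernel_on_def supported_on_def)
  ultimately show ?thesis unfolding c_def[symmetric] kernel_on_def annihilates_on_def by simp
qed

lemma nullity_on_schur_at:
  assumes fin: "finite T" and u: "u \<in> T" and v: "v \<in> T" and uv: "u \<noteq> v"
    and Mvv: "M v v \<noteq> 0" and leaf: "\<forall>y\<in>T. y \<notin> {u, v} \<longrightarrow> M v y = 0 \<and> M y v = 0"
  shows "nullity_on M T = nullity_on (schur_at M u v) (T - {v})"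
proof (rule nullity_on_eq_via_fun_upd_zero)
  show "(\<lambda>g. g(v := 0)) ` kernel_on M T = kernel_on (schur_at M u v) (T - {v})"
  proof
    show "(\<lambda>g. g(v := 0)) ` kernel_on M T \<subseteq> kernel_on (schur_at M u v) (T - {v})"
      using kernel_on_schur_at[OF assms] by blast
  next
    show "kernel_on (schur_at M u v) (T - {v}) \<subseteq> (\<lambda>g. g(v := 0)) ` kernel_on M T"
    proof
      fix h assume h: "h \<in> kernel_on (schur_at M u v) (T - {v})"
      then have "h = (h(v := - M v u * h u / M v v))(v := 0)"
        by (auto simp: kernel_on_def supported_on_def fun_eq_iff)
      then show "h \<in> (\<lambda>g. g(v := 0)) ` kernel_on M T"
        using kernel_on_schur_at_lift[OF assms h] by blast
    qed
  qed
next
  fix g assume g: "g \<in> kernel_on M T" and off_v: "\<And>y. y \<noteq> v \<Longrightarrow> g y = 0"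
  have "M v u * g u + M v v * g v = 0"
    using annihilates_on_leaf_row[OF fin u v uv, of M g] leaf g by (auto simp: kernel_on_def)
  then show "g v = 0" using off_v[OF uv] Mvv by simp
qed

section \<open>Forests\<close>

definition induced :: "('a \<Rightarrow> 'a \<Rightarrow> bool) \<Rightarrow> 'a set \<Rightarrow> 'a \<Rightarrow> 'a \<Rightarrow> bool" where
  "induced E S x y \<longleftrightarrow> x \<in> S \<and> y \<in> S \<and> E x y"

lemma induced_mono: "S' \<subseteq> S \<Longrightarrow> induced E S' x y \<Longrightarrow> induced E S x y"
  unfolding induced_def by auto

lemma symp_induced_subset: "S' \<subseteq> S \<Longrightarrow> symp (induced E S) \<Longrightarrow> symp (induced E S')"
  unfolding induced_def symp_def by auto

definition has_cycle_rel :: "('a \<Rightarrow> 'a \<Rightarrow> bool) \<Rightarrow> bool" where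
  "has_cycle_rel G \<longleftrightarrow> (\<exists>vs. 3 \<le> length vs \<and> distinct vs \<and>
      (\<forall>i < length vs. G (vs ! i) (vs ! ((i + 1) mod length vs))))"

lemma has_cycle_rel_mono: "(\<And>x y. G' x y \<Longrightarrow> G x y) \<Longrightarrow> has_cycle_rel G' \<Longrightarrow> has_cycle_rel G"
  unfolding has_cycle_rel_def by blast

definition path_in :: "('a \<Rightarrow> 'a \<Rightarrow> bool) \<Rightarrow> 'a set \<Rightarrow> 'a list \<Rightarrow> bool" where
  "path_in G S p \<longleftrightarrow> p \<noteq> [] \<and> distinct p \<and> set p \<subseteq> S \<and>
     (\<forall>i. Suc i < length p \<longrightarrow> G (p ! i) (p ! Suc i))"

lemma longest_path_exists:
  assumes "finite S" "S \<noteq> {}"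
  obtains p where "path_in G S p" "\<And>q. path_in G S q \<Longrightarrow> length q \<le> length p"
proof -
  obtain x where x: "x \<in> S" using assms(2) by auto
  let ?P = "\<lambda>k. \<exists>p. path_in G S p \<and> length p = k"
  have "?P 1" using x by (intro exI[of _ "[x]"]) (auto simp: path_in_def)
  moreover have "k \<le> card S" if "?P k" for k
  proof -
    from that obtain p where p: "path_in G S p" "length p = k" by auto
    then have "card (set p) = k" using distinct_card by (auto simp: path_in_def)
    moreover have "card (set p) \<le> card S" using p assms(1) card_mono by (auto simp: path_in_def)
    ultimately show ?thesis by simp
  qed
  ultimately obtain k where "?P k" "\<forall>k'. ?P k' \<longrightarrow> k' \<le> k"
    using Nat.ex_has_greatest_nat[of ?P 1 "card S"] by blast
  then show ?thesis using that by blast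
qed

lemma path_in_closing_edge_cycle:
  assumes p: "path_in G S p" and j: "2 \<le> j" "j < length p" and close: "G (p ! j) (p ! 0)"
  shows "has_cycle_rel G"
  unfolding has_cycle_rel_def
proof (intro exI[of _ "take (Suc j) p"] conjI allI impI)
  let ?vs = "take (Suc j) p"
  have len: "length ?vs = Suc j" using j by simp
  show "3 \<le> length ?vs" using len j by simp
  show "distinct ?vs" using p by (simp add: path_in_def)
  fix i assume i: "i < length ?vs"
  show "G (?vs ! i) (?vs ! ((i + 1) mod length ?vs))"
  proof (cases "i = j")
    case True
    then show ?thesis using close len by simp
  next
    case False
    then have "i < j" using i len by simp
    moreover have "G (p ! i) (p ! Suc i)" using p \<open>i < j\<close> j unfolding path_in_def by auto
    ultimately show ?thesis using len by simp
  qed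
qed

text \<open>The first vertex of a longest path has all its neighbours on the path; a neighbour
  beyond the second vertex would close a cycle.\<close>

lemma acyclic_has_leaf:
  assumes fin: "finite S" and ne: "S \<noteq> {}" and closed: "\<And>x y. G x y \<Longrightarrow> y \<in> S"
    and sym: "symp G" and irr: "irreflp G" and acyc: "\<not> has_cycle_rel G"
  shows "\<exists>v\<in>S. \<forall>y z. G v y \<longrightarrow> G v z \<longrightarrow> y = z"
proof -
  obtain p where p: "path_in G S p" and longest: "\<And>q. path_in G S q \<Longrightarrow> length q \<le> length p"
    using longest_path_exists[OF fin ne] by blast
  define x0 where "x0 = p ! 0"
  have x0: "x0 \<in> S" using p by (auto simp: path_in_def x0_def)
  have on_path: "\<exists>j<length p. 0 < j \<and> y = p ! j" if y: "G x0 y" for y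
  proof -
    have "y \<in> set p"
    proof (rule ccontr)
      assume y_off: "y \<notin> set p"
      have "path_in G S (y # p)"
        unfolding path_in_def
      proof (intro conjI allI impI)
        show "distinct (y # p)" "set (y # p) \<subseteq> S"
          using p y_off closed[OF y] by (auto simp: path_in_def)
      next
        fix i assume "Suc i < length (y # p)"
        then show "G ((y # p) ! i) ((y # p) ! Suc i)"
          using p sympD[OF sym y] by (cases i) (auto simp: path_in_def x0_def)
      qed simp
      then show False using longest by fastforce
    qed
    then obtain j where j: "j < length p" "y = p ! j" by (auto simp: in_set_conv_nth)
    moreover have "j \<noteq> 0" using y irr j by (cases j) (auto simp: x0_def irreflp_def)
    ultimately show ?thesis by blast
  qed
  have "y = p ! 1" if y: "G x0 y" for y
  proof -
    obtain j where j: "j < length p" "0 < j" "y = p ! j" using on_path[OF y] by blast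
    have "\<not> 2 \<le> j"
      using path_in_closing_edge_cycle[OF p _ j(1)] sympD[OF sym y] j(3) acyc by (auto simp: x0_def)
    then have "j = 1" using j(2) by simp
    then show ?thesis using j(3) by simp
  qed
  then show ?thesis using x0 by blast
qed

definition edge_set :: "('a \<Rightarrow> 'a \<Rightarrow> bool) \<Rightarrow> 'a set set" where
  "edge_set G = {{x, y} | x y. G x y}"

definition components :: "('a \<Rightarrow> 'a \<Rightarrow> bool) \<Rightarrow> 'a set \<Rightarrow> 'a set set" where
  "components G S = S // {(x, y). x \<in> S \<and> y \<in> S \<and> G\<^sup>*\<^sup>* x y}"

lemma components_eq_image: "components G S = (\<lambda>x. {y \<in> S. G\<^sup>*\<^sup>* x y}) ` S"
  unfolding components_def quotient_def by blast

lemma finite_edge_set_induced: "finite S \<Longrightarrow> finite (edge_set (induced E S))"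
  by (rule finite_subset[of _ "Pow S"]) (auto simp: edge_set_def induced_def)

lemma edge_set_remove_isolated:
  assumes "symp (induced E S)" "\<forall>y. \<not> induced E S v y"
  shows "edge_set (induced E S) = edge_set (induced E (S - {v}))"
proof -
  have "induced E S x y \<longleftrightarrow> induced E (S - {v}) x y" for x y
    using assms sympD[OF assms(1), of x y] by (auto simp: induced_def)
  then show ?thesis unfolding edge_set_def by simp
qed

lemma edge_set_remove_leaf:
  assumes sym: "symp (induced E S)" and vu: "induced E S v u"
    and nbr: "\<forall>y. induced E S v y \<longrightarrow> y = u"
  shows "edge_set (induced E S) = insert {u, v} (edge_set (induced E (S - {v})))"
    and "{u, v} \<notin> edge_set (induced E (S - {v}))"
proof -
  show "{u, v} \<notin> edge_set (induced E (S - {v}))"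
    unfolding edge_set_def induced_def by (auto simp: doubleton_eq_iff)
  have "induced E S x y \<longleftrightarrow> induced E (S - {v}) x y \<or> {x, y} = {u, v}" for x y
    using nbr sympD[OF sym, of x y] sympD[OF sym vu] vu
    by (auto simp: induced_def doubleton_eq_iff)
  then show "edge_set (induced E S) = insert {u, v} (edge_set (induced E (S - {v})))"
    unfolding edge_set_def by blast
qed

lemma rtranclp_induced_remove_leaf:
  assumes sym: "symp (induced E S)" and nbr: "\<forall>y. induced E S v y \<longrightarrow> y = u"
    and r: "(induced E S)\<^sup>*\<^sup>* x y" and xv: "x \<noteq> v"
  shows "(y \<noteq> v \<longrightarrow> (induced E (S - {v}))\<^sup>*\<^sup>* x y)
    \<and> (y = v \<longrightarrow> induced E S u v \<and> (induced E (S - {v}))\<^sup>*\<^sup>* x u)"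
  using r
proof (induction rule: rtranclp_induct)
  case base
  then show ?case using xv by simp
next
  case (step y z)
  show ?case
  proof (cases "y = v")
    case True
    then show ?thesis using nbr step.hyps(2) step.IH by auto
  next
    case yv: False
    show ?thesis
    proof (cases "z = v")
      case True
      then have "y = u" using nbr sympD[OF sym step.hyps(2)] by simp
      then show ?thesis using step.IH step.hyps(2) yv True by auto
    next
      case False
      then have "induced E (S - {v}) y z" using step.hyps(2) yv by (auto simp: induced_def)
      then show ?thesis using step.IH yv False by (meson rtranclp.rtrancl_into_rtrancl)
    qed
  qed
qed

lemma rtranclp_induced_subset:
  "S' \<subseteq> S \<Longrightarrow> (induced E S')\<^sup>*\<^sup>* x y \<Longrightarrow> (induced E S)\<^sup>*\<^sup>* x y"
  by (rule rtranclp_mono[THEN predicate2D, rotated]) (auto intro: induced_mono)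

lemma reachable_induced_remove_leaf:
  assumes sym: "symp (induced E S)" and nbr: "\<forall>y. induced E S v y \<longrightarrow> y = u"
    and x: "x \<in> S - {v}" and yv: "y \<noteq> v"
  shows "(induced E S)\<^sup>*\<^sup>* x y \<longleftrightarrow> (induced E (S - {v}))\<^sup>*\<^sup>* x y"
  using rtranclp_induced_remove_leaf[OF sym nbr, of x y] rtranclp_induced_subset[of "S - {v}" S E x y]
    x yv by blast

lemma card_components_remove_isolated:
  assumes fin: "finite S" and sym: "symp (induced E S)" and v: "v \<in> S"
    and iso: "\<forall>y. \<not> induced E S v y"
  shows "card (components (induced E S) S)
    = card (components (induced E (S - {v})) (S - {v})) + 1"
proof -
  let ?G = "induced E S" and ?G' = "induced E (S - {v})" and ?S' = "S - {v}"
  have nbr: "\<forall>y. ?G v y \<longrightarrow> y = v" using iso by simp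
  have unreachable: "\<not> ?G\<^sup>*\<^sup>* x v" if "x \<noteq> v" for x
  proof
    assume "?G\<^sup>*\<^sup>* x v"
    then have "?G v v" using rtranclp_induced_remove_leaf[OF sym nbr _ that] by blast
    then show False using iso by blast
  qed
  have "y = v" if "?G\<^sup>*\<^sup>* v y" for y
    using unreachable[of y] sympD[OF symp_rtranclp[OF sym] that] by blast
  then have cls_v: "{y \<in> S. ?G\<^sup>*\<^sup>* v y} = {v}" using v by blast
  have cls: "{y \<in> S. ?G\<^sup>*\<^sup>* x y} = {y \<in> ?S'. ?G'\<^sup>*\<^sup>* x y}" if x: "x \<in> ?S'" for x
  proof (rule Set.set_eqI)
    fix y
    show "y \<in> {y \<in> S. ?G\<^sup>*\<^sup>* x y} \<longleftrightarrow> y \<in> {y \<in> ?S'. ?G'\<^sup>*\<^sup>* x y}"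
      using reachable_induced_remove_leaf[OF sym nbr x, of y] unreachable[of x] x
      by (cases "y = v") auto
  qed
  have "components ?G S = insert {y \<in> S. ?G\<^sup>*\<^sup>* v y} ((\<lambda>x. {y \<in> S. ?G\<^sup>*\<^sup>* x y}) ` ?S')"
    unfolding components_eq_image using v by blast
  also have "(\<lambda>x. {y \<in> S. ?G\<^sup>*\<^sup>* x y}) ` ?S' = components ?G' ?S'"
    unfolding components_eq_image by (rule image_cong[OF refl cls])
  finally have "components ?G S = insert {v} (components ?G' ?S')" unfolding cls_v .
  moreover have "{v} \<notin> components ?G' ?S'"
    unfolding components_eq_image by blast
  moreover have "finite (components ?G' ?S')"
    unfolding components_eq_image using fin by simp
  ultimately show ?thesis by simp
qed

lemma card_components_remove_leaf:
  assumes fin: "finite S" and sym: "symp (induced E S)" and v: "v \<in> S"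
    and vu: "induced E S v u" and uv: "u \<noteq> v" and nbr: "\<forall>y. induced E S v y \<longrightarrow> y = u"
  shows "card (components (induced E S) S) = card (components (induced E (S - {v})) (S - {v}))"
proof -
  let ?G = "induced E S" and ?G' = "induced E (S - {v})" and ?S' = "S - {v}"
  define attach where "attach X = (if u \<in> X then insert v X else X)" for X
  have u: "u \<in> ?S'" using vu uv by (auto simp: induced_def)
  have edge_uv: "?G u v" using sympD[OF sym vu] .
  have reach_v: "?G\<^sup>*\<^sup>* x v \<longleftrightarrow> ?G'\<^sup>*\<^sup>* x u" if x: "x \<in> ?S'" for x
  proof
    assume "?G\<^sup>*\<^sup>* x v"
    then show "?G'\<^sup>*\<^sup>* x u" using rtranclp_induced_remove_leaf[OF sym nbr, of x v] x by blast
  next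
    assume "?G'\<^sup>*\<^sup>* x u"
    then have "?G\<^sup>*\<^sup>* x u" by (rule rtranclp_induced_subset[rotated]) blast
    then show "?G\<^sup>*\<^sup>* x v" using edge_uv by (rule rtranclp.rtrancl_into_rtrancl)
  qed
  have cls: "{y \<in> S. ?G\<^sup>*\<^sup>* x y} = attach {y \<in> ?S'. ?G'\<^sup>*\<^sup>* x y}" if x: "x \<in> ?S'" for x
  proof (rule Set.set_eqI)
    fix y
    show "y \<in> {y \<in> S. ?G\<^sup>*\<^sup>* x y} \<longleftrightarrow> y \<in> attach {y \<in> ?S'. ?G'\<^sup>*\<^sup>* x y}"
    proof (cases "y = v")
      case True
      then show ?thesis using reach_v[OF x] u v by (simp add: attach_def)
    next
      case False
      then show ?thesis
        using reachable_induced_remove_leaf[OF sym nbr x False] by (auto simp: attach_def)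
    qed
  qed
  have "?G\<^sup>*\<^sup>* v y \<longleftrightarrow> ?G\<^sup>*\<^sup>* u y" for y
    using vu edge_uv by (meson converse_rtranclp_into_rtranclp)
  then have cls_v: "{y \<in> S. ?G\<^sup>*\<^sup>* v y} = attach {y \<in> ?S'. ?G'\<^sup>*\<^sup>* u y}"
    using cls[OF u] by simp
  have "components ?G S = insert {y \<in> S. ?G\<^sup>*\<^sup>* v y} ((\<lambda>x. {y \<in> S. ?G\<^sup>*\<^sup>* x y}) ` ?S')"
    unfolding components_eq_image using v by blast
  also have "(\<lambda>x. {y \<in> S. ?G\<^sup>*\<^sup>* x y}) ` ?S' = attach ` components ?G' ?S'"
    unfolding components_eq_image image_image by (rule image_cong[OF refl cls])
  also have "insert {y \<in> S. ?G\<^sup>*\<^sup>* v y} (attach ` components ?G' ?S') = attach ` components ?G' ?S'"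
    using u unfolding cls_v components_eq_image by blast
  finally have "components ?G S = attach ` components ?G' ?S'" .
  moreover have "inj_on attach (components ?G' ?S')"
    by (rule inj_onI) (auto simp: attach_def components_eq_image insert_ident split: if_splits)
  ultimately show ?thesis by (simp add: card_image)
qed

theorem card_edge_set_forest:
  assumes "finite S" "symp (induced E S)" "irreflp E" "\<not> has_cycle_rel (induced E S)"
  shows "card (edge_set (induced E S)) + card (components (induced E S) S) = card S"
  using assms
proof (induction "card S" arbitrary: S)
  case 0
  then have "S = {}" by simp
  then show ?case by (simp add: edge_set_def components_def induced_def)
next
  case (Suc n)
  note fin = Suc.prems(1) and sym = Suc.prems(2)
  obtain v where v: "v \<in> S" and leaf: "\<forall>y z. induced E S v y \<longrightarrow> induced E S v z \<longrightarrow> y = z"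
    using acyclic_has_leaf[of S "induced E S"] Suc.prems Suc.hyps(2)
    by (fastforce simp: induced_def irreflp_def)
  let ?S' = "S - {v}"
  have card_S: "card S = card ?S' + 1" using card_Suc_Diff1[OF fin v] by simp
  have "\<not> has_cycle_rel (induced E ?S')"
    using has_cycle_rel_mono[of "induced E ?S'" "induced E S"] induced_mono[of ?S' S E] Suc.prems(4)
    by blast
  then have IH: "card (edge_set (induced E ?S')) + card (components (induced E ?S') ?S') = card ?S'"
    using Suc.hyps Suc.prems(3) card_S fin symp_induced_subset[OF _ sym, of ?S'] by simp
  show ?case
  proof (cases "\<exists>u. induced E S v u")
    case False
    then show ?thesis
      using IH card_S edge_set_remove_isolated[OF sym] card_components_remove_isolated[OF fin sym v]
      by simp
  next
    case True
    then obtain u where vu: "induced E S v u" by blast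
    then have nbr: "\<forall>y. induced E S v y \<longrightarrow> y = u" using leaf by blast
    have uv: "u \<noteq> v" using vu Suc.prems(3) by (auto simp: induced_def irreflp_def)
    show ?thesis
      using IH card_S edge_set_remove_leaf[OF sym vu nbr] finite_edge_set_induced[of ?S' E] fin
        card_components_remove_leaf[OF fin sym v vu uv nbr] by simp
  qed
qed

section \<open>The invariant under leaf removal\<close>

definition support_graph :: "(nat \<Rightarrow> nat \<Rightarrow> real) \<Rightarrow> nat \<Rightarrow> nat \<Rightarrow> bool" where
  "support_graph M x y \<longleftrightarrow> x \<noteq> y \<and> M x y \<noteq> 0"

abbreviation adj_on :: "(nat \<Rightarrow> nat \<Rightarrow> real) \<Rightarrow> nat set \<Rightarrow> nat \<Rightarrow> nat \<Rightarrow> bool" where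
  "adj_on M S \<equiv> induced (support_graph M) S"

lemma adj_on_iff: "adj_on M S x y \<longleftrightarrow> x \<in> S \<and> y \<in> S \<and> x \<noteq> y \<and> M x y \<noteq> 0"
  by (simp add: induced_def support_graph_def)

definition symmetric_on :: "(nat \<Rightarrow> nat \<Rightarrow> real) \<Rightarrow> nat set \<Rightarrow> bool" where
  "symmetric_on M S \<longleftrightarrow> (\<forall>x\<in>S. \<forall>y\<in>S. M x y = M y x)"

lemma symmetric_on_subset: "S' \<subseteq> S \<Longrightarrow> symmetric_on M S \<Longrightarrow> symmetric_on M S'"
  unfolding symmetric_on_def by blast

lemma symp_adj_on: "symmetric_on M S \<Longrightarrow> symp (adj_on M S)"
  unfolding symmetric_on_def symp_def adj_on_iff by metis

lemma leaf_entries_zero: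
  assumes "symmetric_on M S" "v \<in> S" "\<forall>y. adj_on M S v y \<longrightarrow> y = u"
  shows "\<forall>y\<in>S. y \<notin> {u, v} \<longrightarrow> M v y = 0 \<and> M y v = 0"
  using assms unfolding symmetric_on_def adj_on_iff by auto

lemma adj_on_schur_at: "adj_on (schur_at M u v) S = adj_on M S"
  by (auto simp: fun_eq_iff adj_on_iff schur_at_def)

lemma symmetric_on_schur_at: "symmetric_on M S \<Longrightarrow> symmetric_on (schur_at M u v) S"
  unfolding symmetric_on_def schur_at_def by auto

definition zero_core :: "(nat \<Rightarrow> nat \<Rightarrow> real) \<Rightarrow> nat set \<Rightarrow> (nat \<Rightarrow> real) \<Rightarrow> nat set" where
  "zero_core M S f = {x \<in> S. f x = 0 \<and> (\<forall>y. adj_on M S x y \<longrightarrow> f y = 0)}"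

definition nonzero_edges :: "(nat \<Rightarrow> nat \<Rightarrow> real) \<Rightarrow> nat set \<Rightarrow> (nat \<Rightarrow> real) \<Rightarrow> nat set set" where
  "nonzero_edges M S f = {e \<in> edge_set (adj_on M S). \<forall>x\<in>e. f x \<noteq> 0}"

text \<open>\<open>zero_core M S f\<close> is the set \<open>F\<close> of the statement. The following invariant is the form
  of the formula that is stable under removing leaves.\<close>

definition core_nullity_formula :: "(nat \<Rightarrow> nat \<Rightarrow> real) \<Rightarrow> nat set \<Rightarrow> (nat \<Rightarrow> real) \<Rightarrow> bool" where
  "core_nullity_formula M S f \<longleftrightarrow>
     int (nullity_on M (S - zero_core M S f)) = int (card S) - 2 * int (card {x \<in> S. f x = 0})
       + int (card (zero_core M S f)) - int (card (nonzero_edges M S f))"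

text \<open>Needed for \<open>r \<ge> r~\<close>: it lets kernel vectors on \<open>S - F\<close> extend by zero to \<open>S\<close>.\<close>

definition core_kernel_vanishes :: "(nat \<Rightarrow> nat \<Rightarrow> real) \<Rightarrow> nat set \<Rightarrow> (nat \<Rightarrow> real) \<Rightarrow> bool" where
  "core_kernel_vanishes M S f \<longleftrightarrow>
     (\<forall>g\<in>kernel_on M (S - zero_core M S f). \<forall>x. f x = 0 \<longrightarrow> g x = 0)"

lemma zero_core_subset: "zero_core M S f \<subseteq> S"
  unfolding zero_core_def by blast

lemma zero_core_remove_iff:
  assumes "x \<in> S - {v}" "adj_on M S x v \<Longrightarrow> f v = 0"
  shows "x \<in> zero_core M S f \<longleftrightarrow> x \<in> zero_core M (S - {v}) f"
  using assms by (auto simp: zero_core_def adj_on_iff)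

lemma nonzero_edges_remove:
  assumes sym: "symmetric_on M S" and zero: "\<forall>y. adj_on M S v y \<longrightarrow> f v = 0 \<or> f y = 0"
  shows "nonzero_edges M S f = nonzero_edges M (S - {v}) f"
proof -
  have "adj_on M S x y \<and> f x \<noteq> 0 \<and> f y \<noteq> 0 \<longleftrightarrow> adj_on M (S - {v}) x y \<and> f x \<noteq> 0 \<and> f y \<noteq> 0"
    for x y
    using zero sympD[OF symp_adj_on[OF sym], of x y] by (auto simp: adj_on_iff)
  then show ?thesis unfolding nonzero_edges_def edge_set_def by blast
qed

lemma card_zeros_remove:
  assumes "finite S" "v \<in> S"
  shows "card {x \<in> S. f x = 0} = card {x \<in> S - {v}. f x = 0} + (if f v = 0 then 1 else 0)"
proof -
  have "{x \<in> S. f x = 0}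
      = (if f v = 0 then insert v {x \<in> S - {v}. f x = 0} else {x \<in> S - {v}. f x = 0})"
    using assms(2) by auto
  then show ?thesis using assms(1) by simp
qed

lemma zero_core_remove_insert:
  assumes "v \<in> zero_core M S f"
  shows "zero_core M S f = insert v (zero_core M (S - {v}) f)"
proof -
  have "f v = 0" "v \<in> S" using assms by (auto simp: zero_core_def)
  then have "x \<in> zero_core M S f \<longleftrightarrow> x \<in> zero_core M (S - {v}) f" if "x \<in> S - {v}" for x
    using zero_core_remove_iff[OF that] by blast
  then show ?thesis using assms zero_core_subset[of M S f] zero_core_subset[of M "S - {v}" f] by blast
qed

lemma zero_core_remove_eq:
  assumes "v \<notin> zero_core M S f" and "\<forall>x\<in>S - {v}. adj_on M S x v \<longrightarrow> f v = 0 \<or> f x \<noteq> 0"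
  shows "zero_core M (S - {v}) f = zero_core M S f"
proof -
  have "x \<in> zero_core M S f \<longleftrightarrow> x \<in> zero_core M (S - {v}) f" if x: "x \<in> S - {v}" for x
  proof (cases "f x = 0")
    case True
    then show ?thesis using zero_core_remove_iff[OF x] assms(2) x by blast
  next
    case False
    then show ?thesis by (simp add: zero_core_def)
  qed
  then show ?thesis using assms(1) zero_core_subset[of M S f] zero_core_subset[of M "S - {v}" f] by blast
qed

lemma core_invariant_remove_zero_vertex:
  assumes fin: "finite S" and sym: "symmetric_on M S" and v: "v \<in> zero_core M S f"
    and formula: "core_nullity_formula M (S - {v}) f"
    and vanish: "core_kernel_vanishes M (S - {v}) f"
  shows "core_nullity_formula M S f \<and> core_kernel_vanishes M S f"
proof -
  have vS: "v \<in> S" and fv: "f v = 0" using v by (auto simp: zero_core_def)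
  note core = zero_core_remove_insert[OF v]
  then have same_D: "S - zero_core M S f = S - {v} - zero_core M (S - {v}) f" by blast
  have "v \<notin> zero_core M (S - {v}) f" using zero_core_subset by blast
  then have "card (zero_core M S f) = card (zero_core M (S - {v}) f) + 1"
    unfolding core using finite_subset[OF zero_core_subset] fin by simp
  moreover have "nonzero_edges M S f = nonzero_edges M (S - {v}) f"
    using nonzero_edges_remove[OF sym] fv by blast
  moreover have "card S = card (S - {v}) + 1" using card_Suc_Diff1[OF fin vS] by simp
  ultimately show ?thesis
    using formula vanish card_zeros_remove[OF fin vS, of f] fv
    unfolding core_nullity_formula_def core_kernel_vanishes_def same_D by simp
qed

lemma core_invariant_remove_isolated:
  assumes fin: "finite S" and sym: "symmetric_on M S" and v: "v \<in> S"
    and iso: "\<forall>y. \<not> adj_on M S v y" and fv: "f v \<noteq> 0" and f: "annihilates_on M S f"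
    and formula: "core_nullity_formula M (S - {v}) f"
    and vanish: "core_kernel_vanishes M (S - {v}) f"
  shows "core_nullity_formula M S f \<and> core_kernel_vanishes M S f"
proof -
  let ?D = "S - zero_core M S f"
  have entries: "\<forall>y\<in>S. y \<noteq> v \<longrightarrow> M v y = 0 \<and> M y v = 0"
    using leaf_entries_zero[OF sym v, of v] iso by auto
  have Mvv: "M v v = 0"
  proof -
    have "(\<Sum>y\<in>S - {v}. M v y * f y) = 0" using entries by (intro sum.neutral) auto
    then show ?thesis
      using f v fv sum.remove[OF fin v, of "\<lambda>y. M v y * f y"] by (simp add: annihilates_on_def)
  qed
  have no_adj: "\<not> adj_on M S x v" for x
    using iso sympD[OF symp_adj_on[OF sym], of x v] by blast
  have vD: "v \<notin> zero_core M S f" using fv by (simp add: zero_core_def)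
  have core: "zero_core M (S - {v}) f = zero_core M S f"
    using zero_core_remove_eq[OF vD] no_adj by blast
  have D: "?D - {v} = S - {v} - zero_core M (S - {v}) f" unfolding core by blast
  have "nullity_on M ?D = nullity_on M (?D - {v}) + 1"
    using fin v vD Mvv entries by (intro nullity_on_remove_isolated) auto
  moreover have "nonzero_edges M S f = nonzero_edges M (S - {v}) f"
    using nonzero_edges_remove[OF sym] iso by blast
  moreover have "card S = card (S - {v}) + 1" using card_Suc_Diff1[OF fin v] by simp
  ultimately have "core_nullity_formula M S f"
    using formula card_zeros_remove[OF fin v, of f] fv
    unfolding core_nullity_formula_def D core by simp
  moreover have "core_kernel_vanishes M S f"
    unfolding core_kernel_vanishes_def
  proof (intro ballI allI impI)
    fix g x assume g: "g \<in> kernel_on M ?D" and fx: "f x = 0"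
    have "g(v := 0) \<in> kernel_on M (?D - {v})"
      using kernel_on_remove[OF _ _ g] fin v vD entries by auto
    then show "g x = 0"
      using vanish fx fv unfolding core_kernel_vanishes_def D by (metis fun_upd_other)
  qed
  ultimately show ?thesis ..
qed

lemma pendant_edge_remove_core_edges:
  assumes sym: "symmetric_on M S" and vu: "adj_on M S v u" and nbr: "\<forall>y. adj_on M S v y \<longrightarrow> y = u"
    and fv: "f v \<noteq> 0" and fu: "f u = 0"
  shows "zero_core M (S - {u, v}) f = zero_core M S f"
    and "nonzero_edges M (S - {u, v}) f = nonzero_edges M S f"
proof -
  have Q: "S - {u} - {v} = S - {u, v}" by blast
  have uD: "u \<notin> zero_core M S f" and vD: "v \<notin> zero_core M S f"
    using fv sympD[OF symp_adj_on[OF sym] vu] by (auto simp: zero_core_def)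
  have adj_v: "\<not> adj_on M (S - {u}) x v" for x
    using nbr sympD[OF symp_adj_on[OF sym], of x v] by (auto simp: adj_on_iff)
  have "zero_core M (S - {u}) f = zero_core M S f"
    using zero_core_remove_eq[OF uD] fu by blast
  moreover have "zero_core M (S - {u} - {v}) f = zero_core M (S - {u}) f"
    using zero_core_remove_eq[of v M "S - {u}" f] adj_v vD calculation by blast
  ultimately show "zero_core M (S - {u, v}) f = zero_core M S f" unfolding Q by simp
  have "nonzero_edges M S f = nonzero_edges M (S - {u}) f"
    using nonzero_edges_remove[OF sym] fu by blast
  also have "\<dots> = nonzero_edges M (S - {u} - {v}) f"
    using nonzero_edges_remove[OF symmetric_on_subset[OF _ sym]] adj_v
      sympD[OF symp_adj_on[OF symmetric_on_subset[OF _ sym]], of "S - {u}"] by blast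
  finally show "nonzero_edges M (S - {u, v}) f = nonzero_edges M S f" unfolding Q ..
qed

lemma core_invariant_remove_pendant_edge:
  assumes fin: "finite S" and sym: "symmetric_on M S" and v: "v \<in> S"
    and vu: "adj_on M S v u" and nbr: "\<forall>y. adj_on M S v y \<longrightarrow> y = u"
    and fv: "f v \<noteq> 0" and fu: "f u = 0" and f: "annihilates_on M S f"
    and formula: "core_nullity_formula M (S - {u, v}) f"
    and vanish: "core_kernel_vanishes M (S - {u, v}) f"
  shows "core_nullity_formula M S f \<and> core_kernel_vanishes M S f"
proof -
  let ?D = "S - zero_core M S f" and ?Q = "S - {u, v}"
  have u: "u \<in> S" and uv: "u \<noteq> v" and Mvu: "M v u \<noteq> 0" and Muv: "M u v \<noteq> 0"
    using vu sympD[OF symp_adj_on[OF sym] vu] by (auto simp: adj_on_iff)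
  have entries: "\<forall>y\<in>?D. y \<notin> {u, v} \<longrightarrow> M v y = 0 \<and> M y v = 0"
    using leaf_entries_zero[OF sym v nbr] by blast
  have Mvv: "M v v = 0"
    using annihilates_on_leaf_row[OF fin u v uv, of M f] leaf_entries_zero[OF sym v nbr] f fu fv
    by simp
  note core = pendant_edge_remove_core_edges(1)[OF sym vu nbr fv fu]
  have uD: "u \<in> ?D" and vD: "v \<in> ?D"
    using u v fv sympD[OF symp_adj_on[OF sym] vu] by (auto simp: zero_core_def)
  have D: "?D - {u, v} = ?Q - zero_core M ?Q f" unfolding core by blast
  have "nullity_on M ?D = nullity_on M (?D - {u, v})"
    using fin uD vD uv Mvv Mvu Muv entries by (intro nullity_on_remove_pendant_edge) auto
  moreover have "card S = card ?Q + 2"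
    using card_Suc_Diff1[OF fin u] card_Suc_Diff1[of "S - {u}" v] fin v uv
    by (simp add: Diff_insert2[symmetric] insert_commute)
  moreover have "card {x \<in> S. f x = 0} = card {x \<in> ?Q. f x = 0} + 1"
    using card_zeros_remove[OF fin u, of f] card_zeros_remove[of "S - {u}" v f] fin v uv fu fv
    by (simp add: Diff_insert2[symmetric] insert_commute)
  ultimately have "core_nullity_formula M S f"
    using formula pendant_edge_remove_core_edges(2)[OF sym vu nbr fv fu]
    unfolding core_nullity_formula_def D core by simp
  moreover have "core_kernel_vanishes M S f"
    unfolding core_kernel_vanishes_def
  proof (intro ballI allI impI)
    fix g x assume g: "g \<in> kernel_on M ?D" and fx: "f x = 0"
    have "g u = 0" "g(v := 0) \<in> kernel_on M (?Q - zero_core M ?Q f)"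
      using kernel_on_remove_pendant_edge[OF _ uD vD uv Mvv Mvu entries g] fin unfolding D by auto
    then show "g x = 0"
      using vanish fx fv unfolding core_kernel_vanishes_def by (metis fun_upd_other)
  qed
  ultimately show ?thesis ..
qed

lemma core_invariant_schur_leaf:
  assumes fin: "finite S" and sym: "symmetric_on M S" and v: "v \<in> S"
    and vu: "adj_on M S v u" and nbr: "\<forall>y. adj_on M S v y \<longrightarrow> y = u"
    and fv: "f v \<noteq> 0" and fu: "f u \<noteq> 0" and f: "annihilates_on M S f"
    and formula: "core_nullity_formula (schur_at M u v) (S - {v}) f"
    and vanish: "core_kernel_vanishes (schur_at M u v) (S - {v}) f"
  shows "core_nullity_formula M S f \<and> core_kernel_vanishes M S f"
proof -
  let ?D = "S - zero_core M S f" and ?M' = "schur_at M u v"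
  have u: "u \<in> S" and uv: "u \<noteq> v" and Mvu: "M v u \<noteq> 0"
    using vu by (auto simp: adj_on_iff)
  have entries: "\<forall>y\<in>S. y \<notin> {u, v} \<longrightarrow> M v y = 0 \<and> M y v = 0"
    using leaf_entries_zero[OF sym v nbr] .
  have "M v u * f u + M v v * f v = 0"
    using annihilates_on_leaf_row[OF fin u v uv, of M f] entries f by simp
  then have Mvv: "M v v \<noteq> 0" using Mvu fu by auto
  have vD: "v \<notin> zero_core M S f" and uD: "u \<notin> zero_core M S f"
    using fv fu by (auto simp: zero_core_def)
  have "\<forall>x\<in>S - {v}. adj_on M S x v \<longrightarrow> f v = 0 \<or> f x \<noteq> 0"
    using nbr sympD[OF symp_adj_on[OF sym]] fu by blast
  then have core: "zero_core ?M' (S - {v}) f = zero_core M S f"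
    using zero_core_remove_eq[OF vD] by (simp add: zero_core_def adj_on_schur_at)
  have D: "?D - {v} = S - {v} - zero_core ?M' (S - {v}) f" unfolding core by blast
  have "nullity_on M ?D = nullity_on ?M' (?D - {v})"
    using fin u v uv Mvv entries uD vD by (intro nullity_on_schur_at) auto
  moreover have "nonzero_edges M S f = insert {u, v} (nonzero_edges ?M' (S - {v}) f)"
    and "{u, v} \<notin> nonzero_edges ?M' (S - {v}) f"
    using edge_set_remove_leaf[OF symp_adj_on[OF sym] vu nbr] fu fv
    by (auto simp: nonzero_edges_def adj_on_schur_at)
  moreover have "finite (nonzero_edges ?M' (S - {v}) f)"
    using finite_edge_set_induced[of "S - {v}"] fin by (simp add: nonzero_edges_def)
  moreover have "card S = card (S - {v}) + 1" using card_Suc_Diff1[OF fin v] by simp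
  ultimately have "core_nullity_formula M S f"
    using formula card_zeros_remove[OF fin v, of f] fv
    unfolding core_nullity_formula_def D core by simp
  moreover have "core_kernel_vanishes M S f"
    unfolding core_kernel_vanishes_def
  proof (intro ballI allI impI)
    fix g x assume g: "g \<in> kernel_on M ?D" and fx: "f x = 0"
    have "?D \<subseteq> S" by blast
    then have leaf_D: "\<forall>y\<in>?D. y \<notin> {u, v} \<longrightarrow> M v y = 0 \<and> M y v = 0" using entries by blast
    have "g(v := 0) \<in> kernel_on ?M' (?D - {v})"
      using kernel_on_schur_at[OF _ _ _ uv Mvv leaf_D g] fin u v uD vD by auto
    then show "g x = 0"
      using vanish fx fv unfolding core_kernel_vanishes_def D by (metis fun_upd_other)
  qed
  ultimately show ?thesis ..
qed

lemma acyclic_adj_on_subset: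
  "S' \<subseteq> S \<Longrightarrow> \<not> has_cycle_rel (adj_on M S) \<Longrightarrow> \<not> has_cycle_rel (adj_on M S')"
  using has_cycle_rel_mono[of "adj_on M S'" "adj_on M S"] induced_mono[of S' S] by blast

lemma core_invariant_empty: "core_nullity_formula M {} f \<and> core_kernel_vanishes M {} f"
  by (simp add: core_nullity_formula_def core_kernel_vanishes_def zero_core_def nonzero_edges_def
      edge_set_def induced_def nullity_on_empty kernel_on_empty)

lemma leaf_zero_in_zero_core:
  assumes fin: "finite S" and sym: "symmetric_on M S" and f: "annihilates_on M S f"
    and v: "v \<in> S" and leaf: "\<forall>y z. adj_on M S v y \<longrightarrow> adj_on M S v z \<longrightarrow> y = z"
    and fv: "f v = 0"
  shows "v \<in> zero_core M S f"
proof -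
  have "f y = 0" if y: "adj_on M S v y" for y
  proof -
    have "\<forall>z. adj_on M S v z \<longrightarrow> z = y" using leaf y by blast
    then have "\<forall>z\<in>S. z \<notin> {y, v} \<longrightarrow> M v z = 0"
      using leaf_entries_zero[OF sym v] by blast
    moreover have "y \<in> S" "y \<noteq> v" "M v y \<noteq> 0" using y by (auto simp: adj_on_iff)
    ultimately show ?thesis
      using annihilates_on_leaf_row[OF fin _ v, of y M f] f fv by simp
  qed
  then show ?thesis using v fv by (simp add: zero_core_def)
qed

lemma annihilates_on_remove_pendant_edge:
  assumes fin: "finite S" and u: "u \<in> S" and v: "v \<in> S" and uv: "u \<noteq> v"
    and entries: "\<forall>y\<in>S. y \<notin> {u, v} \<longrightarrow> M v y = 0 \<and> M y v = 0"
    and f: "annihilates_on M S f" and fu: "f u = 0"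
  shows "annihilates_on M (S - {u, v}) f"
proof -
  have "annihilates_on M (S - {u}) f" using annihilates_on_remove[OF fin u f] fu by simp
  then have "annihilates_on M (S - {u} - {v}) f"
    using annihilates_on_remove[of "S - {u}" v] fin v uv entries by auto
  moreover have "S - {u} - {v} = S - {u, v}" by blast
  ultimately show ?thesis by simp
qed

lemma core_invariant_leaf_step:
  assumes fin: "finite S" and sym: "symmetric_on M S" and acyc: "\<not> has_cycle_rel (adj_on M S)"
    and f: "annihilates_on M S f"
    and v: "v \<in> S" and leaf: "\<forall>y z. adj_on M S v y \<longrightarrow> adj_on M S v z \<longrightarrow> y = z"
    and IH: "\<And>M' S'. S' \<subseteq> S - {v} \<Longrightarrow> symmetric_on M' S' \<Longrightarrow> \<not> has_cycle_rel (adj_on M' S')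
      \<Longrightarrow> annihilates_on M' S' f \<Longrightarrow> core_nullity_formula M' S' f \<and> core_kernel_vanishes M' S' f"
  shows "core_nullity_formula M S f \<and> core_kernel_vanishes M S f"
proof -
  have sym_v: "symmetric_on M (S - {v})" using symmetric_on_subset[OF _ sym] by blast
  have acyc_v: "\<not> has_cycle_rel (adj_on M (S - {v}))" using acyclic_adj_on_subset[OF _ acyc] by blast
  consider (zero) "f v = 0" | (isolated) "f v \<noteq> 0" "\<forall>y. \<not> adj_on M S v y"
    | (pendant) u where "f v \<noteq> 0" "adj_on M S v u" "f u = 0"
    | (schur) u where "f v \<noteq> 0" "adj_on M S v u" "f u \<noteq> 0"
    by blast
  then show ?thesis
  proof cases
    case zero
    then have "annihilates_on M (S - {v}) f" using annihilates_on_remove[OF fin v f] by simp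
    then show ?thesis
      using core_invariant_remove_zero_vertex[OF fin sym leaf_zero_in_zero_core[OF fin sym f v leaf zero]]
        IH[OF _ sym_v acyc_v] by blast
  next
    case isolated
    then have "annihilates_on M (S - {v}) f"
      using annihilates_on_remove[OF fin v f] leaf_entries_zero[OF sym v, of v] by auto
    then show ?thesis
      using core_invariant_remove_isolated[OF fin sym v isolated(2,1) f] IH[OF _ sym_v acyc_v] by blast
  next
    case (pendant u)
    then have nbr: "\<forall>y. adj_on M S v y \<longrightarrow> y = u" using leaf by blast
    have u: "u \<in> S" and uv: "u \<noteq> v" using pendant by (auto simp: adj_on_iff)
    have Q: "S - {u, v} \<subseteq> S - {v}" "S - {u, v} \<subseteq> S" by blast+
    have "annihilates_on M (S - {u, v}) f"
      using annihilates_on_remove_pendant_edge[OF fin u v uv leaf_entries_zero[OF sym v nbr] f]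
        pendant(3) by blast
    then show ?thesis
      using core_invariant_remove_pendant_edge[OF fin sym v pendant(2) nbr pendant(1,3) f]
        IH[OF Q(1) symmetric_on_subset[OF Q(2) sym] acyclic_adj_on_subset[OF Q(2) acyc]] by blast
  next
    case (schur u)
    then have nbr: "\<forall>y. adj_on M S v y \<longrightarrow> y = u" using leaf by blast
    have u: "u \<in> S" and uv: "u \<noteq> v" using schur by (auto simp: adj_on_iff)
    note entries = leaf_entries_zero[OF sym v nbr]
    have "M v u * f u + M v v * f v = 0"
      using annihilates_on_leaf_row[OF fin u v uv, of M f] entries f by simp
    then have "M v v \<noteq> 0" using schur by (auto simp: adj_on_iff)
    then have "annihilates_on (schur_at M u v) (S - {v}) f"
      using annihilates_on_schur_at[OF fin u v uv _ entries f] by simp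
    moreover have "\<not> has_cycle_rel (adj_on (schur_at M u v) (S - {v}))"
      using acyc_v by (simp add: adj_on_schur_at)
    ultimately show ?thesis
      using core_invariant_schur_leaf[OF fin sym v schur(2) nbr schur(1,3) f]
        IH[OF _ symmetric_on_schur_at[OF sym_v]] by blast
  qed
qed

theorem core_invariant_forest:
  assumes "finite S" "symmetric_on M S" "\<not> has_cycle_rel (adj_on M S)" "annihilates_on M S f"
  shows "core_nullity_formula M S f \<and> core_kernel_vanishes M S f"
  using assms
proof (induction "card S" arbitrary: S M rule: less_induct)
  case less
  note fin = less.prems(1)
  show ?case
  proof (cases "S = {}")
    case True
    then show ?thesis by (simp add: core_invariant_empty)
  next
    case False
    obtain v where v: "v \<in> S" and leaf: "\<forall>y z. adj_on M S v y \<longrightarrow> adj_on M S v z \<longrightarrow> y = z"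
      using acyclic_has_leaf[OF fin False _ symp_adj_on[OF less.prems(2)] _ less.prems(3)]
      by (auto simp: adj_on_iff irreflp_def)
    have "card S' < card S" if "S' \<subseteq> S - {v}" for S'
      using psubset_card_mono[OF fin, of S'] that v by blast
    then show ?thesis
      using core_invariant_leaf_step[OF less.prems v leaf] less.hyps finite_subset[of _ S] fin
      by (meson Diff_subset subset_trans)
  qed
qed

lemma nullity_on_core_le:
  assumes fin: "finite S" and vanish: "core_kernel_vanishes M S f"
  shows "nullity_on M (S - zero_core M S f) \<le> nullity_on M S"
proof -
  let ?F = "zero_core M S f"
  have "kernel_on M (S - ?F) \<subseteq> kernel_on M S"
  proof
    fix g assume g: "g \<in> kernel_on M (S - ?F)"
    have "M x y * g y = 0" if x: "x \<in> ?F" and y: "y \<in> S - ?F" for x y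
    proof (cases "adj_on M S x y")
      case True
      then have "f y = 0" using x by (simp add: zero_core_def)
      then show ?thesis using vanish g by (simp add: core_kernel_vanishes_def)
    next
      case False
      then show ?thesis using x y zero_core_subset[of M S f] by (auto simp: adj_on_iff)
    qed
    then show "g \<in> kernel_on M S"
      using kernel_on_extend[OF fin _ g] by blast
  qed
  then show ?thesis
    unfolding nullity_on_def by (rule dim_mono_supported_on[OF fin kernel_on_supported_on])
qed

theorem nullity_on_core_forest:
  assumes fin: "finite S" and sym: "symmetric_on M S" and acyc: "\<not> has_cycle_rel (adj_on M S)"
    and f: "annihilates_on M S f"
  shows "nullity_on M (S - zero_core M S f) \<le> nullity_on M S"
    and "int (nullity_on M (S - zero_core M S f))
      = int (card {e \<in> edge_set (adj_on M S). \<exists>x\<in>e. f x = 0}) - 2 * int (card {x \<in> S. f x = 0})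
        + int (card (components (adj_on M S) S)) + int (card (zero_core M S f))" (is ?formula)
proof -
  note inv = core_invariant_forest[OF assms]
  show "nullity_on M (S - zero_core M S f) \<le> nullity_on M S"
    using nullity_on_core_le[OF fin] inv by blast
  have "irreflp (support_graph M)" by (simp add: irreflp_def support_graph_def)
  then have forest: "card (edge_set (adj_on M S)) + card (components (adj_on M S) S) = card S"
    using card_edge_set_forest[OF fin symp_adj_on[OF sym] _ acyc] by blast
  have "edge_set (adj_on M S) = {e \<in> edge_set (adj_on M S). \<exists>x\<in>e. f x = 0} \<union> nonzero_edges M S f"
    and "{e \<in> edge_set (adj_on M S). \<exists>x\<in>e. f x = 0} \<inter> nonzero_edges M S f = {}"
    by (auto simp: nonzero_edges_def)
  then have "card (edge_set (adj_on M S))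
      = card {e \<in> edge_set (adj_on M S). \<exists>x\<in>e. f x = 0} + card (nonzero_edges M S f)"
    using finite_edge_set_induced[OF fin] card_Un_disjoint
    by (metis (no_types, lifting) finite_Un)
  then show ?formula
    using inv forest unfolding core_nullity_formula_def by linarith
qed

section \<open>Multiplicities of eigenvalues of symmetric matrices\<close>

lemma mult_mat_vec_index_sum:
  assumes "A \<in> carrier_mat n n" "v \<in> carrier_vec n" "i < n"
  shows "(A *\<^sub>v v) $ i = (\<Sum>j<n. A $$ (i, j) * v $ j)"
  using assms by (auto simp: scalar_prod_def lessThan_atLeast0 intro!: sum.cong)

lemma cnj_quadratic_form_if_symmetric:
  fixes B :: "real mat"
  assumes B: "B \<in> carrier_mat n n" and sym: "transpose_mat B = B"
  shows "cnj (\<Sum>i<n. \<Sum>j<n. cnj (v $ i) * complex_of_real (B $$ (i, j)) * v $ j)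
    = (\<Sum>i<n. \<Sum>j<n. cnj (v $ i) * complex_of_real (B $$ (i, j)) * v $ j)"
proof -
  have symB: "B $$ (i, j) = B $$ (j, i)" if "i < n" "j < n" for i j
    using arg_cong[OF sym, of "\<lambda>M. M $$ (j, i)"] that B by auto
  have "cnj (\<Sum>i<n. \<Sum>j<n. cnj (v $ i) * complex_of_real (B $$ (i, j)) * v $ j)
      = (\<Sum>i<n. \<Sum>j<n. v $ i * complex_of_real (B $$ (i, j)) * cnj (v $ j))"
    by (simp add: cnj_sum)
  also have "\<dots> = (\<Sum>j<n. \<Sum>i<n. v $ i * complex_of_real (B $$ (i, j)) * cnj (v $ j))"
    by (rule sum.swap)
  also have "\<dots> = (\<Sum>i<n. \<Sum>j<n. cnj (v $ i) * complex_of_real (B $$ (i, j)) * v $ j)"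
    using symB by (intro sum.cong refl) (auto simp: algebra_simps)
  finally show ?thesis .
qed

lemma eigenvalue_real_if_symmetric:
  fixes B :: "real mat"
  assumes B: "B \<in> carrier_mat n n" and sym: "transpose_mat B = B"
    and ev: "eigenvector (map_mat complex_of_real B) v a"
  shows "a = of_real (Re a)"
proof -
  let ?Bc = "map_mat complex_of_real B"
  have Bc: "?Bc \<in> carrier_mat n n" using B by simp
  from ev have v: "v \<in> carrier_vec n" and v0: "v \<noteq> 0\<^sub>v n" and Bv: "?Bc *\<^sub>v v = a \<cdot>\<^sub>v v"
    unfolding eigenvector_def using B by auto
  have row: "(\<Sum>j<n. complex_of_real (B $$ (i, j)) * v $ j) = a * v $ i" if i: "i < n" for i
    using mult_mat_vec_index_sum[OF Bc v i] B i Bv v by simp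
  define s where "s = (\<Sum>i<n. \<Sum>j<n. cnj (v $ i) * complex_of_real (B $$ (i, j)) * v $ j)"
  define N where "N = (\<Sum>i<n. (cmod (v $ i))\<^sup>2)"
  have norm: "complex_of_real ((cmod (v $ i))\<^sup>2) = cnj (v $ i) * v $ i" for i
    by (simp only: complex_norm_square mult.commute)
  have "s = (\<Sum>i<n. cnj (v $ i) * (\<Sum>j<n. complex_of_real (B $$ (i, j)) * v $ j))"
    unfolding s_def by (simp add: sum_distrib_left mult.assoc)
  also have "\<dots> = (\<Sum>i<n. cnj (v $ i) * (a * v $ i))" using row by simp
  also have "\<dots> = a * of_real N"
    unfolding N_def of_real_sum norm sum_distrib_left by (simp add: ac_simps)
  finally have s_eq: "s = a * of_real N" .
  have "N > 0"
  proof -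
    obtain i where i: "i < n" "v $ i \<noteq> 0" using v v0 by (metis eq_vecI carrier_vecD index_zero_vec)
    then have "0 < (cmod (v $ i))\<^sup>2" by simp
    also have "\<dots> \<le> N" unfolding N_def using i by (intro member_le_sum) auto
    finally show ?thesis .
  qed
  then have "cnj a = a"
    using s_eq cnj_quadratic_form_if_symmetric[OF B sym, of v] unfolding s_def[symmetric]
    by (metis complex_cnj_complex_of_real complex_cnj_mult mult_cancel_right of_real_eq_0_iff
        less_irrefl)
  then show ?thesis by (metis Re_complex_of_real Reals_cases Reals_cnj_iff)
qed

interpretation of_real_poly_hom: map_poly_inj_idom_hom "of_real :: real \<Rightarrow> complex" ..

lemma char_poly_splits_if_symmetric:
  fixes B :: "real mat"
  assumes B: "B \<in> carrier_mat n n" and sym: "transpose_mat B = B"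
  obtains es where "char_poly B = (\<Prod>a\<leftarrow>es. [:- a, 1:])"
proof -
  let ?Bc = "map_mat complex_of_real B"
  have Bc: "?Bc \<in> carrier_mat n n" using B by simp
  obtain as where as: "char_poly ?Bc = (\<Prod>a\<leftarrow>as. [:- a, 1:])"
    using char_poly_factorized[OF Bc] by blast
  have real: "a = of_real (Re a)" if a: "a \<in> set as" for a
  proof -
    have "poly (char_poly ?Bc) a = 0" unfolding as using a by (induct as) auto
    then obtain v where "eigenvector ?Bc v a"
      using eigenvalue_root_char_poly[OF Bc] unfolding eigenvalue_def by blast
    then show ?thesis by (rule eigenvalue_real_if_symmetric[OF B sym])
  qed
  have "map_poly complex_of_real (char_poly B) = char_poly ?Bc"
    by (rule of_real_hom.char_poly_hom[OF B, symmetric])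
  also have "\<dots> = (\<Prod>a\<leftarrow>map Re as. [:- complex_of_real a, 1:])"
    unfolding as using real by (induct as) auto
  also have "\<dots> = map_poly complex_of_real (\<Prod>a\<leftarrow>map Re as. [:- a, 1:])"
    unfolding of_real_poly_hom.hom_prod_list by (simp add: o_def)
  finally have "char_poly B = (\<Prod>a\<leftarrow>map Re as. [:- a, 1:])" by simp
  then show ?thesis using that by blast
qed

lemma mat_kernel_square_eq_if_symmetric:
  fixes C :: "real mat"
  assumes C: "C \<in> carrier_mat n n" and sym: "transpose_mat C = C"
  shows "mat_kernel (C * C) = mat_kernel C"
proof
  show "mat_kernel C \<subseteq> mat_kernel (C * C)"
    using mat_kernel_mult_subset[OF C C] by simp
next
  show "mat_kernel (C * C) \<subseteq> mat_kernel C"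
  proof
    fix v assume "v \<in> mat_kernel (C * C)"
    then have v: "v \<in> carrier_vec n" and CCv: "(C * C) *\<^sub>v v = 0\<^sub>v n"
      using mat_kernelD[OF mult_carrier_mat[OF C C]] by auto
    define w where "w = C *\<^sub>v v"
    have w: "w \<in> carrier_vec n" unfolding w_def using C v by simp
    have Cw: "(\<Sum>j<n. C $$ (i, j) * w $ j) = 0" if "i < n" for i
      using mult_mat_vec_index_sum[OF C w that] CCv assoc_mult_mat_vec[OF C C v] that
      by (simp add: w_def)
    have symC: "C $$ (i, j) = C $$ (j, i)" if "i < n" "j < n" for i j
      using arg_cong[OF sym, of "\<lambda>M. M $$ (j, i)"] that C by auto
    \<comment> \<open>\<open>w \<bullet> w = v \<bullet> C w = 0\<close> by symmetry of \<open>C\<close>\<close>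
    have "(\<Sum>i<n. w $ i * w $ i) = (\<Sum>i<n. \<Sum>j<n. C $$ (i, j) * v $ j * w $ i)"
      unfolding w_def using mult_mat_vec_index_sum[OF C v] by (simp add: sum_distrib_right)
    also have "\<dots> = (\<Sum>j<n. v $ j * (\<Sum>i<n. C $$ (j, i) * w $ i))"
      by (subst sum.swap) (simp add: symC sum_distrib_left algebra_simps)
    also have "\<dots> = 0" using Cw by simp
    finally have "(\<Sum>i<n. w $ i * w $ i) = 0" .
    then have "\<forall>i\<in>{..<n}. w $ i * w $ i = 0"
      by (subst sum_nonneg_eq_0_iff[symmetric]) auto
    then have "w = 0\<^sub>v n" using w by (intro eq_vecI) auto
    then show "v \<in> mat_kernel C" using mat_kernelI[OF C v] unfolding w_def by simp
  qed
qed

lemma sum_list_min2_eq_min1: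
  fixes L :: "nat list"
  assumes "sum_list (map (min 2) L) = sum_list (map (min 1) L)"
  shows "sum_list L = sum_list (map (min 1) L)"
  using assms
proof (induct L)
  case (Cons x L)
  have "sum_list (map (min 1) L) \<le> sum_list (map (min 2) L)"
    by (rule sum_list_mono) auto
  moreover have "min 1 x \<le> min 2 x" by simp
  ultimately have "min 2 x = min 1 x" "sum_list (map (min 2) L) = sum_list (map (min 1) L)"
    using Cons.prems by auto
  then show ?case using Cons.hyps by auto
qed simp

text \<open>\<open>ker (C * C) = ker C\<close> forces all Jordan blocks for \<open>e\<close> to have size one.\<close>

lemma order_char_poly_eq_kernel_dim:
  fixes B :: "'a :: conjugatable_ordered_field mat"
  assumes B: "B \<in> carrier_mat n n" and split: "char_poly B = (\<Prod>a\<leftarrow>es. [:- a, 1:])"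
    and semisimple: "mat_kernel (char_matrix B e * char_matrix B e) = mat_kernel (char_matrix B e)"
  shows "Polynomial.order e (char_poly B) = kernel_dim (char_matrix B e)"
proof -
  obtain n_as where jnf: "jordan_nf B n_as" using jordan_nf_exists[OF B split] by blast
  let ?C = "char_matrix B e" and ?L = "map fst [(n, e')\<leftarrow>n_as. e' = e]"
  have C: "?C \<in> carrier_mat n n" using B by simp
  then have "dim_gen_eigenspace B e 2 = dim_gen_eigenspace B e 1"
    using semisimple by (simp add: dim_gen_eigenspace_def kernel_dim_def numeral_2_eq_2)
  then have "sum_list ?L = sum_list (map (min 1) ?L)"
    unfolding dim_gen_eigenspace[OF jnf] by (rule sum_list_min2_eq_min1)
  then have "Polynomial.order e (char_poly B) = dim_gen_eigenspace B e 1"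
    unfolding jordan_nf_order[OF jnf] dim_gen_eigenspace[OF jnf] by (simp add: split_def)
  also have "\<dots> = kernel_dim ?C" using C by (simp add: dim_gen_eigenspace_def)
  finally show ?thesis .
qed

lemma order_char_poly_eq_kernel_dim_if_symmetric:
  fixes B :: "real mat"
  assumes B: "B \<in> carrier_mat n n" and sym: "transpose_mat B = B"
  shows "Polynomial.order e (char_poly B) = kernel_dim (char_matrix B e)"
proof -
  obtain es where es: "char_poly B = (\<Prod>a\<leftarrow>es. [:- a, 1:])"
    using char_poly_splits_if_symmetric[OF B sym] .
  have "transpose_mat (char_matrix B e) = char_matrix B e"
  proof (rule eq_matI)
    fix i j assume "i < dim_row (char_matrix B e)" "j < dim_col (char_matrix B e)"
    then show "transpose_mat (char_matrix B e) $$ (i, j) = char_matrix B e $$ (i, j)"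
      using arg_cong[OF sym, of "\<lambda>M. M $$ (j, i)"] B by (auto simp: char_matrix_def)
  qed (use B in \<open>auto simp: char_matrix_def\<close>)
  then have "mat_kernel (char_matrix B e * char_matrix B e) = mat_kernel (char_matrix B e)"
    using mat_kernel_square_eq_if_symmetric[of _ n] B by simp
  then show ?thesis by (rule order_char_poly_eq_kernel_dim[OF B es])
qed

section \<open>Principal submatrices as kernels on vertex sets\<close>

text \<open>\<open>index_in I\<close> inverts \<open>pick I\<close>, the enumeration of \<open>I\<close> used by \<open>submatrix\<close>.\<close>

definition index_in :: "nat set \<Rightarrow> nat \<Rightarrow> nat" where
  "index_in I x = card {a \<in> I. a < x}"

definition fun_of_vec :: "nat set \<Rightarrow> real vec \<Rightarrow> nat \<Rightarrow> real" where
  "fun_of_vec I w x = (if x \<in> I then w $ index_in I x else 0)"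

lemma pick_index_in: "x \<in> I \<Longrightarrow> pick I (index_in I x) = x"
  unfolding index_in_def by (rule pick_card_in_set)

lemma index_in_pick: "i < card I \<Longrightarrow> index_in I (pick I i) = i"
  unfolding index_in_def by (rule card_pick_le)

lemma index_in_less: "finite I \<Longrightarrow> x \<in> I \<Longrightarrow> index_in I x < card I"
  unfolding index_in_def by (intro psubset_card_mono) auto

lemma bij_betw_pick: "finite I \<Longrightarrow> bij_betw (pick I) {..<card I} I"
  by (rule bij_betw_byWitness[where f' = "index_in I"])
    (auto simp: pick_index_in index_in_pick index_in_less pick_in_set_le)

lemma fun_of_vec_pick: "i < card I \<Longrightarrow> fun_of_vec I w (pick I i) = w $ i"
  by (simp add: fun_of_vec_def pick_in_set_le index_in_pick)

lemma inj_on_fun_of_vec: "inj_on (fun_of_vec I) (carrier_vec (card I))"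
proof
  fix v w assume v: "v \<in> carrier_vec (card I)" and w: "w \<in> carrier_vec (card I)"
    and eq: "fun_of_vec I v = fun_of_vec I w"
  show "v = w"
  proof (rule eq_vecI)
    fix i assume "i < dim_vec w"
    then have "i < card I" using w by simp
    then show "v $ i = w $ i" using fun_cong[OF eq, of "pick I i"] by (simp add: fun_of_vec_pick)
  qed (use v w in simp)
qed

lemma kernel_dim_eq_dim_fun_of_vec:
  assumes fin: "finite I" and C: "C \<in> carrier_mat (card I) (card I)"
  shows "kernel_dim C = fspace.dim (fun_of_vec I ` mat_kernel C)"
proof -
  let ?k = "card I" and ?\<phi> = "fun_of_vec I"
  interpret K: kernel ?k ?k C by unfold_locales (rule C)
  obtain Bs where Bs: "finite Bs" "K.basis Bs" using kernel_basis_exists[OF C] by blast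
  have BsK: "Bs \<subseteq> mat_kernel C" and span_Bs: "K.span Bs = mat_kernel C"
    and indep_Bs: "K.lin_indpt Bs"
    using Bs(2) unfolding K.Ker.basis_def by auto
  have ker_carrier: "mat_kernel C \<subseteq> carrier_vec ?k" using mat_kernel_carrier[OF C] by auto
  have inj_Bs: "inj_on ?\<phi> Bs" using inj_on_subset[OF inj_on_fun_of_vec] BsK ker_carrier by blast
  have lincomb: "?\<phi> (K.lincomb a A) = (\<Sum>b\<in>A. scale_fun (a b) (?\<phi> b))" if A: "A \<subseteq> Bs" for a A
  proof
    fix x
    show "?\<phi> (K.lincomb a A) x = (\<Sum>b\<in>A. scale_fun (a b) (?\<phi> b)) x"
      using K.lincomb_index[OF index_in_less[OF fin] , of x A a] A BsK
      by (cases "x \<in> I") (auto simp: fun_of_vec_def sum_fun_apply)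
  qed
  have "?\<phi> ` mat_kernel C \<subseteq> fspace.span (?\<phi> ` Bs)"
  proof
    fix g assume "g \<in> ?\<phi> ` mat_kernel C"
    then obtain w where w: "w \<in> K.span Bs" "g = ?\<phi> w" using span_Bs by auto
    then obtain a A where aA: "w = K.lincomb a A" "finite A" "A \<subseteq> Bs"
      unfolding K.Ker.span_def by auto
    have "(\<Sum>b\<in>A. scale_fun (a b) (?\<phi> b)) \<in> fspace.span (?\<phi> ` Bs)"
      using aA(3) by (intro fspace.span_sum fspace.span_scale fspace.span_base) auto
    then show "g \<in> fspace.span (?\<phi> ` Bs)" using w aA lincomb by simp
  qed
  moreover have "fspace.independent (?\<phi> ` Bs)"
  proof (rule fspace.independent_if_scalars_zero)
    show "finite (?\<phi> ` Bs)" using Bs(1) by simp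
  next
    fix c y assume c: "(\<Sum>y\<in>?\<phi> ` Bs. scale_fun (c y) y) = 0" and y: "y \<in> ?\<phi> ` Bs"
    let ?w = "K.lincomb (c \<circ> ?\<phi>) Bs"
    have "?\<phi> ?w = 0"
      using lincomb[of Bs "c \<circ> ?\<phi>"] c sum.reindex[OF inj_Bs, of "\<lambda>y. scale_fun (c y) y"] by simp
    moreover have "?\<phi> (0\<^sub>v ?k) = 0"
      by (auto simp: fun_eq_iff fun_of_vec_def index_in_less[OF fin])
    moreover have "?w \<in> carrier_vec ?k"
      using K.Ker.lincomb_closed[of Bs] BsK ker_carrier by auto
    ultimately have w0: "?w = 0\<^sub>v ?k"
      using inj_on_fun_of_vec by (metis inj_onD zero_carrier_vec)
    obtain b where b: "b \<in> Bs" "y = ?\<phi> b" using y by auto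
    show "c y = 0"
    proof (rule ccontr)
      assume "c y \<noteq> 0"
      then have "K.lin_dep Bs"
        unfolding K.Ker.lin_dep_def using Bs(1) b w0
        by (intro exI[of _ Bs] exI[of _ "c \<circ> ?\<phi>"] exI[of _ b]) auto
      then show False using indep_Bs by simp
    qed
  qed
  ultimately have "card (?\<phi> ` Bs) = fspace.dim (?\<phi> ` mat_kernel C)"
    using BsK by (intro fspace.basis_card_eq_dim) auto
  then show ?thesis using K.Ker.dim_basis[OF Bs] card_image[OF inj_Bs] by simp
qed

definition char_entries :: "real mat \<Rightarrow> real \<Rightarrow> nat \<Rightarrow> nat \<Rightarrow> real" where
  "char_entries A e x y = A $$ (x, y) - (if x = y then e else 0)"

lemma submatrix_carrier_mat:
  assumes "A \<in> carrier_mat n n" "I \<subseteq> {0..<n}"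
  shows "submatrix A I I \<in> carrier_mat (card I) (card I)"
proof -
  have rows: "{i. i < dim_row A \<and> i \<in> I} = I" "{j. j < dim_col A \<and> j \<in> I} = I"
    using assms by auto
  show ?thesis unfolding carrier_mat_def mem_Collect_eq dim_submatrix rows by simp
qed

lemma submatrix_symmetric:
  assumes A: "A \<in> carrier_mat n n" and sym: "A\<^sup>T = A" and I: "I \<subseteq> {0..<n}"
  shows "transpose_mat (submatrix A I I) = submatrix A I I"
proof -
  have S: "submatrix A I I \<in> carrier_mat (card I) (card I)" by (rule submatrix_carrier_mat[OF A I])
  have rows: "{i. i < dim_row A \<and> i \<in> I} = I" "{j. j < dim_col A \<and> j \<in> I} = I"
    using A I by auto
  show ?thesis
  proof (rule eq_matI)
    fix i j assume "i < dim_row (submatrix A I I)" "j < dim_col (submatrix A I I)"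
    then have ij: "i < card I" "j < card I" using S by auto
    then have "pick I i < n" "pick I j < n" using pick_in_set_le[of i I] pick_in_set_le[of j I] I by auto
    then have "A $$ (pick I j, pick I i) = A $$ (pick I i, pick I j)"
      using arg_cong[OF sym, of "\<lambda>B. B $$ (pick I i, pick I j)"] A by simp
    then show "transpose_mat (submatrix A I I) $$ (i, j) = submatrix A I I $$ (i, j)"
      using ij S submatrix_index[of _ A I _ I] unfolding rows by auto
  qed (use S in auto)
qed

lemma char_matrix_submatrix_mult_vec:
  assumes A: "A \<in> carrier_mat n n" and I: "I \<subseteq> {0..<n}"
    and w: "w \<in> carrier_vec (card I)" and i: "i < card I"
  shows "(char_matrix (submatrix A I I) e *\<^sub>v w) $ i
    = (\<Sum>y\<in>I. char_entries A e (pick I i) y * fun_of_vec I w y)"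
proof -
  let ?S = "submatrix A I I"
  have fin: "finite I" using I finite_subset by blast
  have S: "?S \<in> carrier_mat (card I) (card I)" by (rule submatrix_carrier_mat[OF A I])
  have rows: "{i. i < dim_row A \<and> i \<in> I} = I" "{j. j < dim_col A \<and> j \<in> I} = I" using A I by auto
  have "char_matrix ?S e $$ (i, j) = char_entries A e (pick I i) (pick I j)" if j: "j < card I" for j
  proof -
    have "pick I i = pick I j \<longleftrightarrow> i = j" using index_in_pick[OF i] index_in_pick[OF j] by metis
    then show ?thesis
      using i j S submatrix_index[of i A I j I] rows by (auto simp: char_matrix_def char_entries_def)
  qed
  then have "(char_matrix ?S e *\<^sub>v w) $ i
      = (\<Sum>j<card I. char_entries A e (pick I i) (pick I j) * fun_of_vec I w (pick I j))"
    using mult_mat_vec_index_sum[of "char_matrix ?S e" "card I", OF _ w i] S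
    by (simp add: fun_of_vec_pick)
  also have "\<dots> = (\<Sum>y\<in>I. char_entries A e (pick I i) y * fun_of_vec I w y)"
    by (rule sum.reindex_bij_betw[OF bij_betw_pick[OF fin]])
  finally show ?thesis .
qed

lemma fun_of_vec_kernel_submatrix:
  assumes A: "A \<in> carrier_mat n n" and I: "I \<subseteq> {0..<n}"
  shows "fun_of_vec I ` mat_kernel (char_matrix (submatrix A I I) e) = kernel_on (char_entries A e) I"
proof (intro equalityI subsetI)
  let ?C = "char_matrix (submatrix A I I) e"
  have fin: "finite I" using I finite_subset by blast
  have C: "?C \<in> carrier_mat (card I) (card I)" using submatrix_carrier_mat[OF A I] by simp
  {
    fix g assume "g \<in> fun_of_vec I ` mat_kernel ?C"
    then obtain w where w: "w \<in> carrier_vec (card I)" "?C *\<^sub>v w = 0\<^sub>v (card I)"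
      and g: "g = fun_of_vec I w"
      using mat_kernelD[OF C] by blast
    have "(\<Sum>y\<in>I. char_entries A e x y * g y) = 0" if x: "x \<in> I" for x
      using char_matrix_submatrix_mult_vec[OF A I w(1) index_in_less[OF fin x], of e] w(2)
        pick_index_in[OF x] index_in_less[OF fin x] g by simp
    then show "g \<in> kernel_on (char_entries A e) I"
      by (simp add: kernel_on_def supported_on_def annihilates_on_def g fun_of_vec_def)
  next
    fix g assume g: "g \<in> kernel_on (char_entries A e) I"
    define w where "w = vec (card I) (\<lambda>i. g (pick I i))"
    have w: "w \<in> carrier_vec (card I)" unfolding w_def by simp
    have "fun_of_vec I w = g"
      using g by (auto simp: fun_eq_iff fun_of_vec_def w_def pick_index_in index_in_less[OF fin]
          kernel_on_def supported_on_def)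
    moreover have "?C *\<^sub>v w = 0\<^sub>v (card I)"
    proof (rule eq_vecI)
      fix i assume "i < dim_vec (0\<^sub>v (card I) :: real vec)"
      then have i: "i < card I" by simp
      then show "(?C *\<^sub>v w) $ i = 0\<^sub>v (card I) $ i"
        using char_matrix_submatrix_mult_vec[OF A I w i, of e] g \<open>fun_of_vec I w = g\<close>
          pick_in_set_le[of i I]
        by (simp add: kernel_on_def annihilates_on_def)
    qed (use C in simp)
    ultimately show "g \<in> fun_of_vec I ` mat_kernel ?C"
      using mat_kernelI[OF C w] by blast
  }
qed

lemma eig_mult_submatrix_eq_nullity_on:
  assumes A: "A \<in> carrier_mat n n" and sym: "A\<^sup>T = A" and I: "I \<subseteq> {0..<n}"
  shows "eig_mult (submatrix A I I) e = nullity_on (char_entries A e) I"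
proof -
  let ?S = "submatrix A I I"
  have fin: "finite I" using I finite_subset by blast
  have S: "?S \<in> carrier_mat (card I) (card I)" by (rule submatrix_carrier_mat[OF A I])
  have "eig_mult ?S e = kernel_dim (char_matrix ?S e)"
    unfolding eig_mult_def
    by (rule order_char_poly_eq_kernel_dim_if_symmetric[OF S submatrix_symmetric[OF A sym I]])
  also have "\<dots> = fspace.dim (fun_of_vec I ` mat_kernel (char_matrix ?S e))"
    using S by (intro kernel_dim_eq_dim_fun_of_vec[OF fin]) simp
  finally show ?thesis unfolding nullity_on_def fun_of_vec_kernel_submatrix[OF A I] .
qed

lemma submatrix_all:
  assumes A: "A \<in> carrier_mat n n"
  shows "submatrix A {0..<n} {0..<n} = A"
proof -
  have pick: "pick {0..<n} i = i" if "i < n" for i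
  proof -
    have "{a \<in> {0..<n}. a < i} = {0..<i}" using that by auto
    then show ?thesis using pick_index_in[of i "{0..<n}"] that unfolding index_in_def by simp
  qed
  have "{i. i < n \<and> i \<in> {0..<n}} = {0..<n}" by auto
  then show ?thesis
    using A by (intro eq_matI) (auto simp: dim_submatrix submatrix_index pick)
qed

lemma madj_eq_adj_on: "madj A = adj_on (char_entries A e) (mvert A)"
  by (auto simp: fun_eq_iff madj_def adj_on_iff mvert_def char_entries_def)

lemma symmetric_on_char_entries:
  assumes "A \<in> carrier_mat n n" "A\<^sup>T = A"
  shows "symmetric_on (char_entries A e) (mvert A)"
proof -
  have "A $$ (x, y) = A $$ (y, x)" if "x < n" "y < n" for x y
    using arg_cong[OF assms(2), of "\<lambda>B. B $$ (y, x)"] assms(1) that by simp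
  then show ?thesis using assms(1) by (auto simp: symmetric_on_def char_entries_def mvert_def)
qed

lemma annihilates_on_eigenvector:
  assumes A: "A \<in> carrier_mat n n" and f: "eigenvector A f e"
  shows "annihilates_on (char_entries A e) (mvert A) (\<lambda>x. f $ x)"
  unfolding annihilates_on_def
proof
  fix x assume "x \<in> mvert A"
  then have x: "x < n" using A by (simp add: mvert_def)
  have fc: "f \<in> carrier_vec n" and Af: "A *\<^sub>v f = e \<cdot>\<^sub>v f"
    using f A unfolding eigenvector_def by auto
  have V: "mvert A = {..<n}" using A by (auto simp: mvert_def)
  have "(\<Sum>y\<in>mvert A. char_entries A e x y * f $ y)
      = (\<Sum>y<n. A $$ (x, y) * f $ y - (if y = x then e * f $ y else 0))"
    unfolding V by (intro sum.cong refl) (auto simp: char_entries_def algebra_simps)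
  also have "\<dots> = (\<Sum>y<n. A $$ (x, y) * f $ y) - e * f $ x"
    using x by (simp add: sum_subtractf)
  also have "\<dots> = 0"
    using mult_mat_vec_index_sum[OF A fc x] Af x fc by simp
  finally show "(\<Sum>y\<in>mvert A. char_entries A e x y * f $ y) = 0" .
qed

theorem corollary5p4:
  fixes A :: "real mat" and n :: nat and lam :: real and f :: "real vec"
  assumes "A \<in> carrier_mat n n"
    and "A\<^sup>T = A"
    and "\<not> has_cycle A"
    and "eigenvalue A lam"
    and "eigenvector A f lam"
  defines "F \<equiv> {x \<in> mvert A. f $ x = 0 \<and> (\<forall>y. madj A x y \<longrightarrow> f $ y = 0)}"
  defines "z \<equiv> card {x \<in> mvert A. f $ x = 0}"
  defines "e0 \<equiv> card {e \<in> medges A. \<exists>x \<in> e. f $ x = 0}"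
  defines "c \<equiv> num_components A"
  shows "eig_mult A lam \<ge> eig_mult (submatrix A (mvert A - F) (mvert A - F)) lam
    \<and> int (eig_mult (submatrix A (mvert A - F) (mvert A - F)) lam)
        = int e0 - 2 * int z + int c + int (card F)"
proof -
  let ?M = "char_entries A lam" and ?V = "mvert A"
  have adj: "madj A = adj_on ?M ?V" by (rule madj_eq_adj_on)
  have V: "?V = {0..<n}" using assms(1) by (simp add: mvert_def)
  have "\<not> has_cycle_rel (adj_on ?M ?V)"
    using assms(3) unfolding has_cycle_def has_cycle_rel_def adj .
  note forest = nullity_on_core_forest[OF _ symmetric_on_char_entries[OF assms(1,2)] this
      annihilates_on_eigenvector[OF assms(1,5)]]
  have F: "F = zero_core ?M ?V (\<lambda>x. f $ x)" unfolding F_def zero_core_def adj ..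
  have "eig_mult (submatrix A (?V - F) (?V - F)) lam = nullity_on ?M (?V - F)"
    using eig_mult_submatrix_eq_nullity_on[OF assms(1,2)] V by blast
  moreover have "eig_mult A lam = nullity_on ?M ?V"
    using eig_mult_submatrix_eq_nullity_on[OF assms(1,2), of ?V] submatrix_all[OF assms(1)] V by simp
  moreover have "e0 = card {e \<in> edge_set (adj_on ?M ?V). \<exists>x\<in>e. f $ x = 0}"
    unfolding e0_def medges_def edge_set_def adj ..
  moreover have "c = card (components (adj_on ?M ?V) ?V)"
    unfolding c_def num_components_def components_def adj ..
  ultimately show ?thesis using forest V unfolding F z_def by simp
qed

end
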